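(* Let $c>0$ be an integer and let $t$ be a function of the input length $n$. Any language recognized by a Turing machine (with a read-only input tape holding $\rhd w \lhd$ and one read-write work tape) that, on every input of length $n$, uses at most $\lfloor \log(n+2)\rfloor$ work-tape cells, has a work tape alphabet of size at most $2^c$, and runs within $t(n)$ time, can also be recognized by a $(c+5)$-head finite automaton within $t(n)\cdot\left(\left(2c+\tfrac{3}{2}\right)n+2c+2\right)$ time.
   Context: Logarithms are base $2$. For an input string $w$ of length $n$, the input tape contains $\rhd w\lhd$, where $\rhd,\lhd$ are left and right end-markers not in the input alphabet. A $k$-head finite automaton is a finite-state machine with $k$ read-only heads on a tape containing $\rhd w\lhd$, all starting on the left end-marker; in each step, based on its current state and the $k$ symbols scanned by the heads, it changes state and moves each head independently one cell left, one cell right, or leaves it in place; it halts when it enters an accept or reject state or a head moves beyond an end-marker (the latter counting as rejection). It recognizes the set of strings it accepts. "Within $T(n)$ time" means the machine halts within $T(n)$ steps on every input of length $n$. *)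

theory Defs
  imports Complex_Main
begin

datatype 'a tsym = LEnd | REnd | Sym 'a

datatype move = MLeft | MStay | MRight

fun mv :: "move \<Rightarrow> int" where
  "mv MLeft = -1" | "mv MStay = 0" | "mv MRight = 1"

text \<open>The input tape holds LEnd w REnd at positions 0 .. length w + 1.
  Positions outside this range are never read (a head leaving it halts the machine).\<close>
definition tape_at :: "'a list \<Rightarrow> int \<Rightarrow> 'a tsym" where
  "tape_at w i = (if i \<le> 0 then LEnd
                  else if i \<ge> int (length w) + 1 then REnd
                  else Sym (w ! nat (i - 1)))"

definition in_range :: "'a list \<Rightarrow> int \<Rightarrow> bool" where
  "in_range w i \<longleftrightarrow> 0 \<le> i \<and> i \<le> int (length w) + 1"

text \<open>The transition reads the state, the input symbol and the work symbol and returns the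
  new state, the input-head move, the symbol written on the work tape and the work-head move.\<close>
record ('s, 'a, 'g) tm =
  tm_start :: 's
  tm_acc :: "'s set"
  tm_rej :: "'s set"
  tm_blank :: 'g
  tm_delta :: "'s \<Rightarrow> 'a tsym \<Rightarrow> 'g \<Rightarrow> 's \<times> move \<times> 'g \<times> move"

text \<open>Configuration: state, input head position, work head position, work tape contents
  (two-way infinite, indexed by int).\<close>
type_synonym ('s, 'g) tm_conf = "'s \<times> int \<times> int \<times> (int \<Rightarrow> 'g)"

definition tm_init :: "('s, 'a, 'g) tm \<Rightarrow> ('s, 'g) tm_conf" where
  "tm_init M = (tm_start M, 0, 0, \<lambda>_. tm_blank M)"

definition tm_step :: "('s, 'a, 'g) tm \<Rightarrow> 'a list \<Rightarrow> ('s, 'g) tm_conf \<Rightarrow> ('s, 'g) tm_conf" where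
  "tm_step M w cf = (case cf of (q, i, j, tp) \<Rightarrow>
     (case tm_delta M q (tape_at w i) (tp j) of (q', di, g, dj) \<Rightarrow>
        (q', i + mv di, j + mv dj, tp(j := g))))"

definition tm_conf_at :: "('s, 'a, 'g) tm \<Rightarrow> 'a list \<Rightarrow> nat \<Rightarrow> ('s, 'g) tm_conf" where
  "tm_conf_at M w m = (tm_step M w ^^ m) (tm_init M)"

definition tm_halted :: "('s, 'a, 'g) tm \<Rightarrow> 'a list \<Rightarrow> ('s, 'g) tm_conf \<Rightarrow> bool" where
  "tm_halted M w cf \<longleftrightarrow>
     fst cf \<in> tm_acc M \<union> tm_rej M \<or> \<not> in_range w (fst (snd cf))"

text \<open>Accepting halting configuration (leaving the tape counts as rejection).\<close>
definition tm_accepting :: "('s, 'a, 'g) tm \<Rightarrow> 'a list \<Rightarrow> ('s, 'g) tm_conf \<Rightarrow> bool" where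
  "tm_accepting M w cf \<longleftrightarrow> fst cf \<in> tm_acc M \<and> in_range w (fst (snd cf))"

definition tm_first_halt :: "('s, 'a, 'g) tm \<Rightarrow> 'a list \<Rightarrow> nat \<Rightarrow> bool" where
  "tm_first_halt M w m \<longleftrightarrow>
     tm_halted M w (tm_conf_at M w m) \<and> (\<forall>j<m. \<not> tm_halted M w (tm_conf_at M w j))"

definition tm_accepts :: "('s, 'a, 'g) tm \<Rightarrow> 'a list \<Rightarrow> bool" where
  "tm_accepts M w \<longleftrightarrow> (\<exists>m. tm_first_halt M w m \<and> tm_accepting M w (tm_conf_at M w m))"

definition tm_recognizes :: "('s, 'a, 'g) tm \<Rightarrow> 'a list set \<Rightarrow> bool" where
  "tm_recognizes M L \<longleftrightarrow> (\<forall>w. w \<in> L \<longleftrightarrow> tm_accepts M w)"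

definition tm_halts_within :: "('s, 'a, 'g) tm \<Rightarrow> 'a list \<Rightarrow> real \<Rightarrow> bool" where
  "tm_halts_within M w T \<longleftrightarrow> (\<exists>m. real m \<le> T \<and> tm_halted M w (tm_conf_at M w m))"

definition tm_space_within :: "('s, 'a, 'g) tm \<Rightarrow> 'a list \<Rightarrow> int \<Rightarrow> bool" where
  "tm_space_within M w s \<longleftrightarrow>
     (\<forall>m. (\<forall>j<m. \<not> tm_halted M w (tm_conf_at M w j)) \<longrightarrow>
        int (card ((\<lambda>j. fst (snd (snd (tm_conf_at M w j)))) ` {..m})) \<le> s)"

record 'a kfa =
  fa_heads :: nat
  fa_states :: "nat set"
  fa_start :: nat
  fa_acc :: "nat set"
  fa_rej :: "nat set"
  fa_delta :: "nat \<Rightarrow> (nat \<Rightarrow> 'a tsym) \<Rightarrow> nat \<times> (nat \<Rightarrow> move)"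

definition kfa_wf :: "'a kfa \<Rightarrow> bool" where
  "kfa_wf A \<longleftrightarrow> finite (fa_states A) \<and> fa_start A \<in> fa_states A \<and>
     fa_acc A \<subseteq> fa_states A \<and> fa_rej A \<subseteq> fa_states A \<and>
     (\<forall>q \<in> fa_states A. \<forall>s. fst (fa_delta A q s) \<in> fa_states A)"

type_synonym fa_conf = "nat \<times> (nat \<Rightarrow> int)"

definition fa_init :: "'a kfa \<Rightarrow> fa_conf" where
  "fa_init A = (fa_start A, \<lambda>_. 0)"

definition fa_step :: "'a kfa \<Rightarrow> 'a list \<Rightarrow> fa_conf \<Rightarrow> fa_conf" where
  "fa_step A w cf = (case cf of (q, p) \<Rightarrow>
     (case fa_delta A q (\<lambda>i. if i < fa_heads A then tape_at w (p i) else LEnd) of (q', d) \<Rightarrow>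
        (q', \<lambda>i. if i < fa_heads A then p i + mv (d i) else 0)))"

definition fa_conf_at :: "'a kfa \<Rightarrow> 'a list \<Rightarrow> nat \<Rightarrow> fa_conf" where
  "fa_conf_at A w m = (fa_step A w ^^ m) (fa_init A)"

definition fa_heads_ok :: "'a kfa \<Rightarrow> 'a list \<Rightarrow> fa_conf \<Rightarrow> bool" where
  "fa_heads_ok A w cf \<longleftrightarrow> (\<forall>i < fa_heads A. in_range w (snd cf i))"

definition fa_halted :: "'a kfa \<Rightarrow> 'a list \<Rightarrow> fa_conf \<Rightarrow> bool" where
  "fa_halted A w cf \<longleftrightarrow> fst cf \<in> fa_acc A \<union> fa_rej A \<or> \<not> fa_heads_ok A w cf"

definition fa_accepting :: "'a kfa \<Rightarrow> 'a list \<Rightarrow> fa_conf \<Rightarrow> bool" where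
  "fa_accepting A w cf \<longleftrightarrow> fst cf \<in> fa_acc A \<and> fa_heads_ok A w cf"

definition fa_first_halt :: "'a kfa \<Rightarrow> 'a list \<Rightarrow> nat \<Rightarrow> bool" where
  "fa_first_halt A w m \<longleftrightarrow>
     fa_halted A w (fa_conf_at A w m) \<and> (\<forall>j<m. \<not> fa_halted A w (fa_conf_at A w j))"

definition fa_accepts :: "'a kfa \<Rightarrow> 'a list \<Rightarrow> bool" where
  "fa_accepts A w \<longleftrightarrow> (\<exists>m. fa_first_halt A w m \<and> fa_accepting A w (fa_conf_at A w m))"

definition fa_recognizes :: "'a kfa \<Rightarrow> 'a list set \<Rightarrow> bool" where
  "fa_recognizes A L \<longleftrightarrow> (\<forall>w. w \<in> L \<longleftrightarrow> fa_accepts A w)"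

definition fa_halts_within :: "'a kfa \<Rightarrow> 'a list \<Rightarrow> real \<Rightarrow> bool" where
  "fa_halts_within A w T \<longleftrightarrow> (\<exists>m. real m \<le> T \<and> fa_halted A w (fa_conf_at A w m))"

end

theory Submission
  imports Defs "HOL-Library.Countable"
begin

text \<open>
  The automaton keeps the contents of the two leftmost visited work cells in its finite control.
  The remaining visited cells, numbered \<open>d = 0, 1, \<dots>\<close> from the third one on, are cut into
  \<open>c\<close> bit planes: plane \<open>k\<close> is the number \<open>v\<^sub>k\<close> whose binary digit \<open>d\<close> is bit \<open>k\<close> of the
  code of cell \<open>d\<close>, and it is stored as the position of one head. At most
  \<open>s = \<lfloor>log (n + 2)\<rfloor>\<close> cells are visited, so \<open>v\<^sub>k < 2\<^sup>s\<^sup>-\<^sup>2 \<le> n + 1\<close> and these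
  positions lie on the input tape. When the work head is on cell \<open>d\<close>, a pair of counter heads
  holds the weight \<open>H = 2\<^sup>d\<close>: one of them at \<open>H\<close>, the other at \<open>0\<close>.

  One step of the Turing machine is simulated by a macro step. Bit \<open>k\<close> of the scanned cell is
  the parity of \<open>v\<^sub>k div H\<close>, found by moving head \<open>k\<close> down to \<open>0\<close> while the counter pair
  zigzags between \<open>0\<close> and \<open>H\<close>; writing adds or subtracts \<open>H\<close>; a move of the work head
  doubles or halves \<open>H\<close>; and a move to the left of all visited cells shifts every plane by one
  binary digit. Each of these passes costs \<open>O(v\<^sub>k + H) = O(n)\<close> steps per plane, and counting
  them carefully gives at most \<open>(2c + 3/2) n + 2c + 1\<close> steps per macro step.
\<close>

section \<open>Binary codes\<close>

definition bits_value :: "(nat \<Rightarrow> bool) \<Rightarrow> nat \<Rightarrow> nat" where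
  "bits_value f D = (\<Sum>d<D. if f d then 2 ^ d else 0)"

lemma bits_value_0 [simp]: "bits_value f 0 = 0"
  by (simp add: bits_value_def)

lemma bits_value_Suc: "bits_value f (Suc D) = bits_value f D + (if f D then 2 ^ D else 0)"
  by (simp add: bits_value_def)

lemma bits_value_less: "bits_value f D < 2 ^ D"
  by (induction D) (simp_all add: bits_value_Suc)

lemma bits_value_less_power:
  assumes "\<And>d. m \<le> d \<Longrightarrow> \<not> f d"
  shows "bits_value f D < 2 ^ m"
proof (cases "D \<le> m")
  case True
  have "bits_value f D < 2 ^ D" by (rule bits_value_less)
  also have "(2::nat) ^ D \<le> 2 ^ m" using True by (rule power_increasing) simp
  finally show ?thesis .
next
  case False
  have "bits_value f D = bits_value f m"
    unfolding bits_value_def using False assms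
    by (intro sum.mono_neutral_right) auto
  then show ?thesis by (simp add: bits_value_less)
qed

lemma odd_bits_value_div:
  assumes "d < D"
  shows "odd (bits_value f D div 2 ^ d) \<longleftrightarrow> f d"
  using assms
proof (induction D)
  case (Suc D)
  show ?case
  proof (cases "d = D")
    case True
    have "bits_value f (Suc D) = bits_value f D + (if f D then 1 else 0) * 2 ^ D"
      by (simp add: bits_value_Suc)
    with bits_value_less[of f D] True show ?thesis by simp
  next
    case False
    then have "d < D" using Suc.prems by simp
    then have dvd: "(2::nat) ^ d dvd (if f D then 2 ^ D else 0)" by (simp add: le_imp_power_dvd)
    have "bits_value f (Suc D) div 2 ^ d = bits_value f D div 2 ^ d + (if f D then 2 ^ D else 0) div 2 ^ d"
      by (simp add: bits_value_Suc div_plus_div_distrib_dvd_right[OF dvd])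
    moreover have "even ((if f D then 2 ^ D else 0) div (2::nat) ^ d)"
      using \<open>d < D\<close> by (auto simp: power_diff[symmetric])
    ultimately show ?thesis using Suc.IH[OF \<open>d < D\<close>] by simp
  qed
qed simp

lemma bits_value_update:
  assumes "d < D" "\<And>d'. d' \<noteq> d \<Longrightarrow> g d' = f d'"
  shows "bits_value g D + (if f d then 2 ^ d else 0) = bits_value f D + (if g d then 2 ^ d else 0)"
proof -
  have "bits_value h D = (\<Sum>d'\<in>{..<D} - {d}. if h d' then 2 ^ d' else 0) + (if h d then 2 ^ d else 0)" for h
    unfolding bits_value_def using assms(1) by (simp add: sum.remove add.commute)
  moreover have "(\<Sum>d'\<in>{..<D} - {d}. if g d' then 2 ^ d' else 0) = (\<Sum>d'\<in>{..<D} - {d}. if f d' then (2::nat) ^ d' else 0)"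
    using assms(2) by (intro sum.cong) auto
  ultimately show ?thesis by simp
qed

lemma bits_value_shift:
  assumes "\<not> f D"
  shows "bits_value (\<lambda>d. if d = 0 then b else f (d - 1)) (Suc D) = 2 * bits_value f D + (if b then 1 else 0)"
proof -
  have "bits_value (\<lambda>d. if d = 0 then b else f (d - 1)) (Suc D)
        = (if b then 1 else 0) + (\<Sum>d<D. if f d then 2 ^ Suc d else 0)"
    unfolding bits_value_def sum.lessThan_Suc_shift by simp
  also have "(\<Sum>d<D. if f d then 2 ^ Suc d else 0) = 2 * bits_value f D"
    unfolding bits_value_def sum_distrib_left by (intro sum.cong) auto
  finally show ?thesis by simp
qed

lemma bits_value_of_nat:
  fixes n :: nat
  assumes "n < 2 ^ D"
  shows "bits_value (\<lambda>d. odd (n div 2 ^ d)) D = n"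
proof -
  have "take_bit D n = (\<Sum>k = 0..<D. push_bit k (of_bool (bit n k)))" by (rule take_bit_sum)
  also have "\<dots> = bits_value (\<lambda>d. odd (n div 2 ^ d)) D"
    unfolding bits_value_def by (intro sum.cong) (auto simp: push_bit_eq_mult bit_iff_odd)
  finally show ?thesis using assms by (simp add: take_bit_nat_eq_self)
qed

lemma ex_code_blank_zero:
  fixes b :: "'g::finite"
  assumes "card (UNIV :: 'g set) \<le> 2 ^ c"
  obtains enc :: "'g \<Rightarrow> nat" where "inj enc" "enc b = 0" "\<And>g. enc g < 2 ^ c"
proof -
  obtain f where f: "bij_betw f (UNIV :: 'g set) {0..<card (UNIV :: 'g set)}"
    using ex_bij_betw_finite_nat[of "UNIV :: 'g set"] by auto
  define enc where "enc g = (if f g = f b then 0 else if f g = 0 then f b else f g)" for g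
  have "inj f" and f_less: "f g < card (UNIV :: 'g set)" for g
    using f by (auto simp: bij_betw_def)
  have "inj enc"
  proof (rule injI)
    fix x y assume "enc x = enc y"
    then have "f x = f y" unfolding enc_def by (auto split: if_splits)
    then show "x = y" using \<open>inj f\<close> by (simp add: inj_eq)
  qed
  moreover have "enc b = 0" by (simp add: enc_def)
  moreover have "enc g < 2 ^ c" for g
    using f_less[of g] f_less[of b] assms by (auto simp: enc_def)
  ultimately show ?thesis by (rule that)
qed

section \<open>A counter pair zigzagging between 0 and H\<close>

text \<open>After \<open>j\<close> unit moves of two heads spanning \<open>H\<close>, which swap roles only when the
  decreasing head is already at \<open>0\<close>, they have swapped \<^term>\<open>zigzag_flips H j\<close> times
  and the decreasing head is at \<^term>\<open>zigzag_rest H j\<close>.\<close>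
definition zigzag_flips :: "nat \<Rightarrow> nat \<Rightarrow> nat" where
  "zigzag_flips H j = (if j = 0 then 0 else (j - 1) div H)"
definition zigzag_rest :: "nat \<Rightarrow> nat \<Rightarrow> nat" where
  "zigzag_rest H j = (if j = 0 then H else H - Suc ((j - 1) mod H))"

lemma zigzag_rest_le: "zigzag_rest H j \<le> H"
  by (simp add: zigzag_rest_def)

context
  fixes H :: nat
  assumes H: "0 < H"
begin

lemma zigzag_rest_eq_0: "zigzag_rest H j = 0 \<longleftrightarrow> 0 < j \<and> j mod H = 0"
proof (cases j)
  case (Suc i)
  with mod_less_divisor[OF H, of i] show ?thesis by (auto simp: zigzag_rest_def mod_Suc)
qed (use H in \<open>simp add: zigzag_rest_def\<close>)

lemma zigzag_Suc_flip:
  "zigzag_rest H j = 0 \<Longrightarrow> zigzag_flips H (Suc j) = Suc (zigzag_flips H j) \<and> zigzag_rest H (Suc j) = H - 1"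
proof (cases j)
  case (Suc i)
  with mod_less_divisor[OF H, of i] show "zigzag_rest H j = 0 \<Longrightarrow> ?thesis"
    by (auto simp: zigzag_rest_def zigzag_flips_def div_Suc mod_Suc)
qed (use H in \<open>simp add: zigzag_rest_def\<close>)

lemma zigzag_Suc:
  "zigzag_rest H j \<noteq> 0 \<Longrightarrow> zigzag_flips H (Suc j) = zigzag_flips H j \<and> zigzag_rest H (Suc j) = zigzag_rest H j - 1"
proof (cases j)
  case (Suc i)
  with mod_less_divisor[OF H, of i] show "zigzag_rest H j \<noteq> 0 \<Longrightarrow> ?thesis"
    by (auto simp: zigzag_rest_def zigzag_flips_def div_Suc mod_Suc)
qed (use H in \<open>simp add: zigzag_rest_def zigzag_flips_def\<close>)

lemma zigzag_div: "v div H = zigzag_flips H v + (if zigzag_rest H v = 0 then 1 else 0)"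
proof (cases v)
  case (Suc i)
  with mod_less_divisor[OF H, of i] show ?thesis
    by (auto simp: zigzag_rest_def zigzag_flips_def div_Suc mod_Suc)
qed (use H in \<open>simp add: zigzag_rest_def zigzag_flips_def\<close>)

lemma zigzag_mod: "v mod H = (if zigzag_rest H v = 0 then 0 else H - zigzag_rest H v)"
proof (cases v)
  case (Suc i)
  with mod_less_divisor[OF H, of i] show ?thesis
    by (auto simp: zigzag_rest_def mod_Suc)
qed (use H in \<open>simp add: zigzag_rest_def\<close>)

end

lemma tm_first_halt_exists:
  assumes "tm_halted M w (tm_conf_at M w m')"
  obtains m where "m \<le> m'" "tm_first_halt M w m"
proof -
  let ?P = "\<lambda>m. tm_halted M w (tm_conf_at M w m)"
  have "?P (Least ?P)" using assms by (rule LeastI)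
  moreover have "\<not> ?P j" if "j < Least ?P" for j using not_less_Least[OF that] .
  ultimately have "tm_first_halt M w (Least ?P)" unfolding tm_first_halt_def by blast
  moreover have "Least ?P \<le> m'" using assms by (rule Least_le)
  ultimately show ?thesis using that by blast
qed

lemma tm_accepts_iff_first_halt:
  "tm_first_halt M w m \<Longrightarrow> tm_accepts M w \<longleftrightarrow> tm_accepting M w (tm_conf_at M w m)"
  unfolding tm_accepts_def tm_first_halt_def by (metis linorder_neqE_nat)

lemma fa_accepts_iff_first_halt:
  "fa_first_halt A w m \<Longrightarrow> fa_accepts A w \<longleftrightarrow> fa_accepting A w (fa_conf_at A w m)"
  unfolding fa_accepts_def fa_first_halt_def by (metis linorder_neqE_nat)

section \<open>The simulating automaton\<close>

instance move :: countable by countable_datatype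

datatype phase = Start | Read | ReadRestore | ReadRewind | Decide | Write | Double | Halve
  | ShiftDouble | ShiftBit | ShiftReturn | Accept | Reject

instance phase :: countable by countable_datatype

text \<open>\<^term>\<open>cell0\<close> and \<^term>\<open>cell1\<close> hold the two leftmost visited
  work cells; \<^term>\<open>window\<close> is the work head position relative to them, where \<open>2\<close> means
  that the head is in the region stored in the bit planes. \<^term>\<open>orient\<close> tells which head of
  the counter pair holds the weight. The remaining fields are the loop variables of the
  subroutines: the current plane, the code of the scanned symbol read so far, a parity bit, and
  the old and new symbol and the work head move of the transition being simulated.\<close>
datatype ('s, 'g) ctl = Ctl (phase: phase) (sim_state: 's) (cell0: 'g) (cell1: 'g) (window: nat)
  (orient: bool) (track: nat) (sym_code: nat) (parity: bool) (old_sym: 'g) (new_sym: 'g)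
  (work_move: move)

instance ctl :: (countable, countable) countable by countable_datatype

definition stay :: "nat \<Rightarrow> move" where
  "stay = (\<lambda>_. MStay)"

text \<open>Head \<open>1\<close> is never moved: the construction needs only \<open>c + 4\<close> heads.\<close>
definition in_head :: nat where "in_head = 0"
definition hi_head :: "bool \<Rightarrow> nat" where "hi_head b = (if b then 2 else 3)"
definition lo_head :: "bool \<Rightarrow> nat" where "lo_head b = (if b then 3 else 2)"
definition aux_head :: nat where "aux_head = 4"
definition track_head :: "nat \<Rightarrow> nat" where "track_head k = 5 + k"

lemmas head_defs = in_head_def hi_head_def lo_head_def aux_head_def track_head_def

definition goto :: "phase \<Rightarrow> bool \<Rightarrow> nat \<Rightarrow> nat \<Rightarrow> bool \<Rightarrow> ('s, 'g) ctl \<Rightarrow> ('s, 'g) ctl" where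
  "goto p ov k cd ee x =
     Ctl p (sim_state x) (cell0 x) (cell1 x) (window x) ov k cd ee (old_sym x) (new_sym x) (work_move x)"

locale simulation =
  fixes M :: "('s::finite, 'a::finite, 'g::finite) tm"
    and c :: nat and enc :: "'g \<Rightarrow> nat"
  assumes c_pos: "c > 0" and enc_inj: "inj enc" and enc_blank: "enc (tm_blank M) = 0"
    and enc_less: "\<And>g. enc g < 2 ^ c"
begin

definition sym_bit :: "'g \<Rightarrow> nat \<Rightarrow> bool" where
  "sym_bit g k = odd (enc g div 2 ^ k)"

definition sym_of_code :: "nat \<Rightarrow> 'g" where
  "sym_of_code n = inv enc n"

definition ready :: "('s, 'g) ctl \<Rightarrow> ('s, 'g) ctl" where
  "ready x = goto Read (orient x) 0 0 False x"

definition resume :: "('s, 'g) ctl \<Rightarrow> 'g \<Rightarrow> 's \<Rightarrow> 'g \<Rightarrow> move \<Rightarrow> ('s, 'g) ctl" where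
  "resume x g q' g' dj =
     (if window x = 0 then
        (case dj of
           MStay \<Rightarrow> Ctl Read q' g' (cell1 x) 0 (orient x) 0 0 False g g' dj
         | MRight \<Rightarrow> Ctl Read q' g' (cell1 x) 1 (orient x) 0 0 False g g' dj
         | MLeft \<Rightarrow> Ctl ShiftDouble q' (tm_blank M) g' 0 (orient x) 0 0 False (cell1 x) g' dj)
      else if window x = 1 then
        (case dj of
           MStay \<Rightarrow> Ctl Read q' (cell0 x) g' 1 (orient x) 0 0 False g g' dj
         | MRight \<Rightarrow> Ctl Read q' (cell0 x) g' 2 (orient x) 0 0 False g g' dj
         | MLeft \<Rightarrow> Ctl Read q' (cell0 x) g' 0 (orient x) 0 0 False g g' dj)
      else Ctl Write q' (cell0 x) (cell1 x) (window x) (orient x) 0 0 False g g' dj)"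

definition decide :: "('s, 'g) ctl \<Rightarrow> 'a tsym \<Rightarrow> 'g \<Rightarrow> ('s, 'g) ctl \<times> (nat \<Rightarrow> move)" where
  "decide x a g = (case tm_delta M (sim_state x) a g of (q', di, g', dj) \<Rightarrow>
     (if q' \<in> tm_acc M then Ctl Accept q' (cell0 x) (cell1 x) (window x) (orient x) 0 0 False g g' dj
      else if q' \<in> tm_rej M then Ctl Reject q' (cell0 x) (cell1 x) (window x) (orient x) 0 0 False g g' dj
      else resume x g q' g' dj,
      stay(in_head := di)))"

definition action :: "('s, 'g) ctl \<Rightarrow> (nat \<Rightarrow> 'a tsym) \<Rightarrow> ('s, 'g) ctl \<times> (nat \<Rightarrow> move)" where
  "action x sy = (let at_end = (\<lambda>h. sy h = LEnd); ov = orient x; k = track x; cd = sym_code x;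
      ee = parity x in
    case phase x of
      Start \<Rightarrow> (ready x, stay(hi_head ov := MRight))
    | Read \<Rightarrow>
        (if window x < 2 then decide x (sy in_head) (if window x = 0 then cell0 x else cell1 x)
         else if at_end (track_head k) then
           (if at_end (hi_head ov) then goto ReadRestore (\<not> ov) k cd (\<not> ee) x
            else goto ReadRestore ov k cd ee x, stay)
         else if at_end (hi_head ov) then
           (goto Read (\<not> ov) k cd (\<not> ee) x,
            stay(track_head k := MLeft, aux_head := MRight, hi_head (\<not> ov) := MLeft, lo_head (\<not> ov) := MRight))
         else (x, stay(track_head k := MLeft, aux_head := MRight, hi_head ov := MLeft, lo_head ov := MRight)))
    | ReadRestore \<Rightarrow>
        (if at_end aux_head then (goto ReadRewind ov k cd ee x, stay)
         else (x, stay(aux_head := MLeft, track_head k := MRight)))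
    | ReadRewind \<Rightarrow>
        (if at_end (lo_head ov) then
           (let cd' = (cd + (if ee then 2 ^ k else 0)) mod 2 ^ c in
            if Suc k < c then goto Read ov (Suc k) cd' False x else goto Decide ov 0 cd' False x, stay)
         else (x, stay(lo_head ov := MLeft, hi_head ov := MRight)))
    | Decide \<Rightarrow> decide x (sy in_head) (sym_of_code cd)
    | Write \<Rightarrow>
        (if c \<le> k then
           (case work_move x of
              MStay \<Rightarrow> ready x
            | MRight \<Rightarrow> goto Double ov k cd False x
            | MLeft \<Rightarrow> goto Halve ov k cd False x, stay)
         else if sym_bit (old_sym x) k = sym_bit (new_sym x) k then (goto Write ov (Suc k) cd ee x, stay)
         else if at_end (hi_head ov) then (goto Write (\<not> ov) (Suc k) cd ee x, stay)
         else (x, stay(track_head k := (if sym_bit (new_sym x) k then MRight else MLeft),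
                       hi_head ov := MLeft, lo_head ov := MRight)))
    | Double \<Rightarrow>
        (if at_end (hi_head ov) \<and> \<not> ee then (goto Read (\<not> ov) 0 0 False x, stay)
         else if \<not> ee then (goto Double ov k cd True x, stay(hi_head ov := MLeft, lo_head ov := MRight))
         else (goto Double ov k cd False x, stay(lo_head ov := MRight)))
    | Halve \<Rightarrow>
        (if at_end (hi_head ov) then
           (if at_end (lo_head ov) then
              (Ctl Read (sim_state x) (cell0 x) (cell1 x) 1 ov 0 0 False (old_sym x) (new_sym x) (work_move x),
               stay(hi_head ov := MRight))
            else (goto Read (\<not> ov) 0 0 False x, stay))
         else (goto Halve ov k cd (\<not> ee) x, stay(hi_head ov := MLeft, lo_head ov := (if ee then MRight else MStay))))
    | ShiftDouble \<Rightarrow>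
        (if at_end (track_head k) \<and> \<not> ee then (goto ShiftBit ov k cd ee x, stay)
         else if \<not> ee then (goto ShiftDouble ov k cd True x, stay(track_head k := MLeft, aux_head := MRight))
         else (goto ShiftDouble ov k cd False x, stay(aux_head := MRight)))
    | ShiftBit \<Rightarrow> (goto ShiftReturn ov k cd ee x, stay(aux_head := (if sym_bit (old_sym x) k then MRight else MStay)))
    | ShiftReturn \<Rightarrow>
        (if at_end aux_head then
           (if Suc k < c then goto ShiftDouble ov (Suc k) cd False x else ready x, stay)
         else (x, stay(aux_head := MLeft, track_head k := MRight)))
    | Accept \<Rightarrow> (x, stay)
    | Reject \<Rightarrow> (x, stay))"

definition ctl_space :: "('s, 'g) ctl set" where
  "ctl_space = {x. track x \<le> c \<and> sym_code x < 2 ^ c \<and> window x \<le> 2}"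

definition ctl_start :: "('s, 'g) ctl" where
  "ctl_start = Ctl (if tm_start M \<in> tm_acc M then Accept else if tm_start M \<in> tm_rej M then Reject else Start)
     (tm_start M) (tm_blank M) (tm_blank M) 0 True 0 0 False (tm_blank M) (tm_blank M) MStay"

definition sim_fa :: "'a kfa" where
  "sim_fa = \<lparr>fa_heads = c + 5, fa_states = to_nat ` ctl_space, fa_start = to_nat ctl_start,
     fa_acc = to_nat ` {x \<in> ctl_space. phase x = Accept}, fa_rej = to_nat ` {x \<in> ctl_space. phase x = Reject},
     fa_delta = (\<lambda>q sy. case action (from_nat q) sy of (x', d) \<Rightarrow> (to_nat x', d))\<rparr>"

lemma sim_fa_simps [simp]:
  "fa_heads sim_fa = c + 5" "fa_states sim_fa = to_nat ` ctl_space" "fa_start sim_fa = to_nat ctl_start"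
  "fa_acc sim_fa = to_nat ` {x \<in> ctl_space. phase x = Accept}"
  "fa_rej sim_fa = to_nat ` {x \<in> ctl_space. phase x = Reject}"
  "fa_delta sim_fa = (\<lambda>q sy. case action (from_nat q) sy of (x', d) \<Rightarrow> (to_nat x', d))"
  by (simp_all add: sim_fa_def)

lemma finite_ctl_space: "finite ctl_space"
proof -
  have UNIV_phase: "UNIV = {Start, Read, ReadRestore, ReadRewind, Decide, Write, Double, Halve,
      ShiftDouble, ShiftBit, ShiftReturn, Accept, Reject}"
    by (auto intro: phase.exhaust)
  have UNIV_move: "UNIV = {MLeft, MStay, MRight}"
    by (auto intro: move.exhaust)
  let ?ctl = "\<lambda>(p, q, a, b, l, ov, k, cd, ee, g, g', d). Ctl p q a b l ov k cd ee g g' d"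
  let ?S = "UNIV \<times> UNIV \<times> UNIV \<times> UNIV \<times> {..2} \<times> UNIV \<times> {..c} \<times> {..<2 ^ c} \<times> UNIV \<times> UNIV \<times> UNIV \<times> UNIV"
  have "ctl_space \<subseteq> ?ctl ` ?S"
  proof
    fix x :: "('s, 'g) ctl"
    assume "x \<in> ctl_space"
    then show "x \<in> ?ctl ` ?S" by (cases x) (auto simp: ctl_space_def image_iff)
  qed
  moreover have "finite (?S :: (phase \<times> 's \<times> 'g \<times> 'g \<times> nat \<times> bool \<times> nat \<times> nat \<times> bool \<times> 'g \<times> 'g \<times> move) set)"
    by (intro finite_cartesian_product) (auto simp: UNIV_phase UNIV_move)
  ultimately show ?thesis by (rule finite_subset[OF _ finite_imageI])
qed

lemma decide_in_ctl_space: "x \<in> ctl_space \<Longrightarrow> fst (decide x a g) \<in> ctl_space"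
  using c_pos by (auto simp: ctl_space_def decide_def resume_def split: prod.splits move.splits)

lemma action_in_ctl_space: "x \<in> ctl_space \<Longrightarrow> fst (action x sy) \<in> ctl_space"
  using c_pos decide_in_ctl_space
  by (cases "phase x") (auto simp: action_def Let_def ctl_space_def ready_def goto_def split: move.splits)

lemma ctl_start_in_ctl_space: "ctl_start \<in> ctl_space"
  by (simp add: ctl_start_def ctl_space_def)

lemma kfa_wf_sim_fa: "kfa_wf sim_fa"
  unfolding kfa_wf_def
  using finite_ctl_space ctl_start_in_ctl_space action_in_ctl_space
  by (auto split: prod.splits) (metis fst_conv imageI)+

end

context simulation
begin

definition scanned :: "'a list \<Rightarrow> (nat \<Rightarrow> int) \<Rightarrow> nat \<Rightarrow> 'a tsym" where
  "scanned w p = (\<lambda>i. if i < c + 5 then tape_at w (p i) else LEnd)"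

definition moved :: "(nat \<Rightarrow> int) \<Rightarrow> (nat \<Rightarrow> move) \<Rightarrow> nat \<Rightarrow> int" where
  "moved p d = (\<lambda>i. if i < c + 5 then p i + mv (d i) else 0)"

definition parked :: "(nat \<Rightarrow> int) \<Rightarrow> bool" where
  "parked p \<longleftrightarrow> (\<forall>i. c + 5 \<le> i \<longrightarrow> p i = 0)"

definition heads_inside :: "'a list \<Rightarrow> (nat \<Rightarrow> int) \<Rightarrow> bool" where
  "heads_inside w p \<longleftrightarrow> (\<forall>i < c + 5. 0 \<le> p i \<and> p i \<le> int (length w) + 1)"

definition runs :: "'a list \<Rightarrow> fa_conf \<Rightarrow> nat \<Rightarrow> fa_conf \<Rightarrow> bool" where
  "runs w C n C' \<longleftrightarrow>
     (fa_step sim_fa w ^^ n) C = C' \<and> (\<forall>j<n. \<not> fa_halted sim_fa w ((fa_step sim_fa w ^^ j) C))"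

lemma fa_step_sim_fa:
  "fa_step sim_fa w (to_nat x, p) =
     (to_nat (fst (action x (scanned w p))), moved p (snd (action x (scanned w p))))"
  by (cases "action x (scanned w p)") (simp add: fa_step_def scanned_def moved_def)

lemma runs_0 [simp]: "runs w C 0 C"
  by (simp add: runs_def)

lemma runs_trans:
  assumes "runs w C a C'" "runs w C' b C''"
  shows "runs w C (a + b) C''"
proof -
  have shift: "(fa_step sim_fa w ^^ (a + j)) C = (fa_step sim_fa w ^^ j) C'" for j
    using assms(1) unfolding runs_def by (subst add.commute) (simp add: funpow_add)
  have "\<not> fa_halted sim_fa w ((fa_step sim_fa w ^^ j) C)" if "j < a + b" for j
  proof (cases "j < a")
    case False
    then obtain j' where "j = a + j'" "j' < b" using \<open>j < a + b\<close> by (metis add_diff_inverse_nat nat_add_left_cancel_less)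
    then show ?thesis using assms(2) shift by (simp add: runs_def)
  qed (use assms(1) in \<open>auto simp: runs_def\<close>)
  then show ?thesis using shift assms(2) by (simp add: runs_def)
qed

lemma not_fa_halted:
  fixes x :: "('s, 'g) ctl"
  assumes "phase x \<noteq> Accept" "phase x \<noteq> Reject" "heads_inside w p"
  shows "\<not> fa_halted sim_fa w (to_nat x, p)"
proof -
  have "to_nat x \<notin> fa_acc sim_fa" "to_nat x \<notin> fa_rej sim_fa"
    using assms(1,2) by (simp_all add: inj_image_mem_iff)
  then show ?thesis
    using assms(3) by (auto simp: fa_halted_def fa_heads_ok_def heads_inside_def in_range_def)
qed

lemma to_nat_in_fa_acc: "x \<in> ctl_space \<Longrightarrow> to_nat x \<in> fa_acc sim_fa \<longleftrightarrow> phase x = Accept"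
  and to_nat_in_fa_rej: "x \<in> ctl_space \<Longrightarrow> to_nat x \<in> fa_rej sim_fa \<longleftrightarrow> phase x = Reject"
  by (auto simp: inj_image_mem_iff)

lemma runs_1:
  assumes "phase x \<noteq> Accept" "phase x \<noteq> Reject" "heads_inside w p" "action x (scanned w p) = (x', d)"
  shows "runs w (to_nat x, p) 1 (to_nat x', moved p d)"
  using assms not_fa_halted[OF assms(1-3)] by (simp add: runs_def fa_step_sim_fa)

lemma runs_loop:
  assumes step: "\<And>j. j < n \<Longrightarrow> action (X j) (scanned w (P j)) = (X (Suc j), D j) \<and> moved (P j) (D j) = P (Suc j)"
    and inside: "\<And>j. j \<le> n \<Longrightarrow> heads_inside w (P j)"
    and running: "\<And>j. j \<le> n \<Longrightarrow> phase (X j) \<noteq> Accept \<and> phase (X j) \<noteq> Reject"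
    and exit: "action (X n) (scanned w (P n)) = (y, d)"
  shows "runs w (to_nat (X 0), P 0) (Suc n) (to_nat y, moved (P n) d)"
proof -
  have "runs w (to_nat (X 0), P 0) m (to_nat (X m), P m)" if "m \<le> n" for m
    using that
  proof (induction m)
    case (Suc m)
    then have "runs w (to_nat (X m), P m) 1 (to_nat (X (Suc m)), P (Suc m))"
      using runs_1[of "X m" w "P m" "X (Suc m)" "D m"] step inside running by simp
    with Suc show ?case using runs_trans[of w _ m _ 1] by simp
  qed simp
  moreover have "runs w (to_nat (X n), P n) 1 (to_nat y, moved (P n) d)"
    using runs_1 inside running exit by simp
  ultimately show ?thesis using runs_trans[of w _ n _ 1] by fastforce
qed

lemma runs_fa_first_halt:
  assumes "runs w (fa_init sim_fa) \<tau> C" "fa_halted sim_fa w C"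
  shows "fa_first_halt sim_fa w \<tau>" "fa_conf_at sim_fa w \<tau> = C"
  using assms by (simp_all add: runs_def fa_conf_at_def fa_first_halt_def)

lemma moved_stay: "parked p \<Longrightarrow> moved p stay = p"
  by (auto simp: moved_def stay_def parked_def)

lemma moved_fun_upd: "h < c + 5 \<Longrightarrow> moved p (d(h := m)) = (moved p d)(h := p h + mv m)"
  by (auto simp: moved_def)

lemma parked_fun_upd: "parked p \<Longrightarrow> h < c + 5 \<Longrightarrow> parked (p(h := v))"
  by (simp add: parked_def)

lemma heads_inside_fun_upd:
  "heads_inside w p \<Longrightarrow> 0 \<le> v \<Longrightarrow> v \<le> int (length w) + 1 \<Longrightarrow> heads_inside w (p(h := v))"
  by (simp add: heads_inside_def)

lemma heads_insideD: "heads_inside w p \<Longrightarrow> h < c + 5 \<Longrightarrow> 0 \<le> p h \<and> p h \<le> int (length w) + 1"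
  by (simp add: heads_inside_def)

lemma head_less [simp]:
  "in_head < c + 5" "aux_head < c + 5" "hi_head b < c + 5" "lo_head b < c + 5"
  "k < c \<Longrightarrow> track_head k < c + 5"
  by (auto simp: head_defs)

lemma head_distinct [simp]:
  "in_head \<noteq> aux_head" "aux_head \<noteq> in_head" "in_head \<noteq> hi_head b" "hi_head b \<noteq> in_head"
  "in_head \<noteq> lo_head b" "lo_head b \<noteq> in_head" "aux_head \<noteq> hi_head b" "hi_head b \<noteq> aux_head"
  "aux_head \<noteq> lo_head b" "lo_head b \<noteq> aux_head" "hi_head b \<noteq> lo_head b" "lo_head b \<noteq> hi_head b"
  "track_head k \<noteq> in_head" "in_head \<noteq> track_head k" "track_head k \<noteq> aux_head" "aux_head \<noteq> track_head k"
  "track_head k \<noteq> hi_head b" "hi_head b \<noteq> track_head k" "track_head k \<noteq> lo_head b" "lo_head b \<noteq> track_head k"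
  "track_head k = track_head k' \<longleftrightarrow> k = k'" "hi_head (\<not> b) = lo_head b" "lo_head (\<not> b) = hi_head b"
  by (auto simp: head_defs)

lemma scanned_eq_LEnd: "h < c + 5 \<Longrightarrow> scanned w p h = LEnd \<longleftrightarrow> p h \<le> 0"
  by (simp add: scanned_def tape_at_def)

lemma scanned_in_head: "scanned w p in_head = tape_at w (p in_head)"
  by (simp add: scanned_def head_defs)

end

context simulation
begin

lemmas ctl_simps = action_def Let_def goto_def ready_def

lemma run_Start:
  fixes x :: "('s, 'g) ctl"
  assumes "parked p" "heads_inside w p" "p (hi_head ov) = 0"
  shows "runs w (to_nat (goto Start ov k cd ee x), p) 1 (to_nat (goto Read ov 0 0 False x), p(hi_head ov := 1))"
proof -
  have "runs w (to_nat (goto Start ov k cd ee x), p) 1 (to_nat (goto Read ov 0 0 False x), moved p (stay(hi_head ov := MRight)))"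
    using assms by (intro runs_1) (simp_all add: ctl_simps)
  then show ?thesis using assms by (simp add: moved_fun_upd moved_stay)
qed

lemma run_Read_divide:
  fixes x :: "('s, 'g) ctl"
  assumes "parked p" "heads_inside w p" "k < c" "window x = 2" "0 < H"
    "p aux_head = 0" "p (track_head k) = int v" "p (hi_head ov) = int H" "p (lo_head ov) = 0"
    "int v \<le> int (length w) + 1" "int H \<le> int (length w) + 1"
  defines "ov' \<equiv> (ov \<noteq> odd (v div H))"
  shows "runs w (to_nat (goto Read ov k cd ee x), p) (Suc v)
     (to_nat (goto ReadRestore ov' k cd (ee \<noteq> odd (v div H)) x),
      p(track_head k := 0, aux_head := int v, hi_head ov' := int (H - v mod H), lo_head ov' := int (v mod H)))"
proof -
  define Or where "Or j = (ov \<noteq> odd (zigzag_flips H j))" for j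
  define Par where "Par j = (ee \<noteq> odd (zigzag_flips H j))" for j
  define X where "X j = goto Read (Or j) k cd (Par j) x" for j
  define P where "P j = p(track_head k := int v - int j, aux_head := int j,
    hi_head (Or j) := int (zigzag_rest H j), lo_head (Or j) := int H - int (zigzag_rest H j))" for j
  define D where "D j = stay(track_head k := MLeft, aux_head := MRight,
    hi_head (Or j \<noteq> (zigzag_rest H j = 0)) := MLeft, lo_head (Or j \<noteq> (zigzag_rest H j = 0)) := MRight)" for j
  note rest_le = zigzag_rest_le[of H]
  have "runs w (to_nat (X 0), P 0) (Suc v) (to_nat (goto ReadRestore ov' k cd (ee \<noteq> odd (v div H)) x), moved (P v) stay)"
  proof (rule runs_loop)
    show "action (X j) (scanned w (P j)) = (X (Suc j), D j) \<and> moved (P j) (D j) = P (Suc j)" if "j < v" for j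
    proof (cases "zigzag_rest H j = 0")
      case True
      with zigzag_Suc_flip[OF \<open>0 < H\<close> True] that assms(1-5) show ?thesis
        by (auto simp: ctl_simps X_def P_def D_def Or_def Par_def scanned_eq_LEnd moved_fun_upd moved_stay
            parked_fun_upd head_defs algebra_simps intro!: ext)
    next
      case False
      with zigzag_Suc[OF \<open>0 < H\<close> False] that assms(1-5) rest_le[of j] show ?thesis
        by (auto simp: ctl_simps X_def P_def D_def Or_def Par_def scanned_eq_LEnd moved_fun_upd moved_stay
            parked_fun_upd intro!: ext)
    qed
    show "heads_inside w (P j)" if "j \<le> v" for j
      using that assms rest_le[of j] unfolding P_def by (intro heads_inside_fun_upd) auto
    show "action (X v) (scanned w (P v)) = (goto ReadRestore ov' k cd (ee \<noteq> odd (v div H)) x, stay)"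
      using assms zigzag_div[OF \<open>0 < H\<close>, of v] zigzag_rest_eq_0[OF \<open>0 < H\<close>, of v]
      by (auto simp: ctl_simps X_def P_def Or_def Par_def scanned_eq_LEnd)
  qed (simp add: X_def goto_def)
  moreover have "X 0 = goto Read ov k cd ee x"
    by (simp add: X_def Or_def Par_def zigzag_flips_def)
  moreover have "P 0 = p"
    using assms by (auto simp: P_def Or_def zigzag_flips_def zigzag_rest_def intro!: ext)
  moreover have "moved (P v) stay = p(track_head k := 0, aux_head := int v,
      hi_head ov' := int (H - v mod H), lo_head ov' := int (v mod H))"
    using assms zigzag_div[OF \<open>0 < H\<close>, of v] zigzag_mod[OF \<open>0 < H\<close>, of v] rest_le[of v]
    by (auto simp: P_def Or_def moved_stay parked_fun_upd head_defs fun_eq_iff)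
  ultimately show ?thesis by simp
qed

lemma run_ReadRestore:
  fixes x :: "('s, 'g) ctl"
  assumes "parked p" "heads_inside w p" "k < c"
    "p aux_head = int f" "p (track_head k) = t" "t + int f \<le> int (length w) + 1"
  shows "runs w (to_nat (goto ReadRestore ov k cd ee x), p) (Suc f)
     (to_nat (goto ReadRewind ov k cd ee x), p(aux_head := 0, track_head k := t + int f))"
proof -
  define P where "P j = p(aux_head := int f - int j, track_head k := t + int j)" for j
  have "0 \<le> t" using heads_insideD[OF assms(2), of "track_head k"] assms by simp
  have "runs w (to_nat (goto ReadRestore ov k cd ee x), P 0) (Suc f)
      (to_nat (goto ReadRewind ov k cd ee x), moved (P f) stay)"
  proof (rule runs_loop)
    show "action (goto ReadRestore ov k cd ee x) (scanned w (P j)) =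
        (goto ReadRestore ov k cd ee x, stay(aux_head := MLeft, track_head k := MRight)) \<and>
      moved (P j) (stay(aux_head := MLeft, track_head k := MRight)) = P (Suc j)" if "j < f" for j
      using that assms by (simp add: ctl_simps P_def scanned_eq_LEnd moved_fun_upd moved_stay parked_fun_upd
          fun_upd_twist algebra_simps)
    show "heads_inside w (P j)" if "j \<le> f" for j
      using that assms \<open>0 \<le> t\<close> unfolding P_def by (intro heads_inside_fun_upd) auto
  qed (use assms in \<open>simp_all add: ctl_simps P_def scanned_eq_LEnd\<close>)
  moreover have "P 0 = p" using assms by (auto simp: P_def)
  ultimately show ?thesis using assms by (simp add: P_def moved_stay parked_fun_upd)
qed

lemma run_ReadRewind:
  fixes x :: "('s, 'g) ctl" and k cd :: nat and ee :: bool
  assumes "parked p" "heads_inside w p" "p (lo_head ov) = int r" "p (hi_head ov) = int H - int r" "r \<le> H"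
    "int H \<le> int (length w) + 1"
  defines "cd' \<equiv> (cd + (if ee then 2 ^ k else 0)) mod 2 ^ c"
  shows "runs w (to_nat (goto ReadRewind ov k cd ee x), p) (Suc r)
     (to_nat (if Suc k < c then goto Read ov (Suc k) cd' False x else goto Decide ov 0 cd' False x),
      p(lo_head ov := 0, hi_head ov := int H))"
proof -
  define P where "P j = p(lo_head ov := int r - int j, hi_head ov := int H - int r + int j)" for j
  have "runs w (to_nat (goto ReadRewind ov k cd ee x), P 0) (Suc r)
      (to_nat (if Suc k < c then goto Read ov (Suc k) cd' False x else goto Decide ov 0 cd' False x), moved (P r) stay)"
  proof (rule runs_loop)
    show "action (goto ReadRewind ov k cd ee x) (scanned w (P j)) =
        (goto ReadRewind ov k cd ee x, stay(lo_head ov := MLeft, hi_head ov := MRight)) \<and>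
      moved (P j) (stay(lo_head ov := MLeft, hi_head ov := MRight)) = P (Suc j)" if "j < r" for j
      using that assms by (simp add: ctl_simps P_def scanned_eq_LEnd moved_fun_upd moved_stay parked_fun_upd
          algebra_simps)
    show "heads_inside w (P j)" if "j \<le> r" for j
      using that assms unfolding P_def by (intro heads_inside_fun_upd) auto
  qed (simp_all add: ctl_simps P_def scanned_eq_LEnd cd'_def)
  moreover have "P 0 = p" using assms by (auto simp: P_def)
  ultimately show ?thesis using assms by (simp add: P_def moved_stay parked_fun_upd)
qed

lemma run_Write_keep:
  fixes x :: "('s, 'g) ctl"
  assumes "parked p" "heads_inside w p" "k < c" "sym_bit (old_sym x) k = sym_bit (new_sym x) k"
  shows "runs w (to_nat (goto Write ov k cd ee x), p) 1 (to_nat (goto Write ov (Suc k) cd ee x), p)"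
  using runs_1[of "goto Write ov k cd ee x" w p "goto Write ov (Suc k) cd ee x" stay] assms
  by (simp add: ctl_simps moved_stay)

lemma run_Write_flip:
  fixes x :: "('s, 'g) ctl"
  assumes "parked p" "heads_inside w p" "k < c" "sym_bit (old_sym x) k \<noteq> sym_bit (new_sym x) k"
    "p (hi_head ov) = int H" "p (lo_head ov) = 0" "p (track_head k) = v" "0 < H"
    "int H \<le> int (length w) + 1"
  defines "v' \<equiv> v + (if sym_bit (new_sym x) k then int H else - int H)"
  assumes "0 \<le> v'" "v' \<le> int (length w) + 1"
  shows "runs w (to_nat (goto Write ov k cd ee x), p) (Suc H)
     (to_nat (goto Write (\<not> ov) (Suc k) cd ee x), p(hi_head ov := 0, lo_head ov := int H, track_head k := v'))"
proof -
  define s where "s = (if sym_bit (new_sym x) k then 1 else (-1::int))"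
  define D where "D = stay(track_head k := (if sym_bit (new_sym x) k then MRight else MLeft),
    hi_head ov := MLeft, lo_head ov := MRight)"
  define P where "P j = p(track_head k := v + s * int j, hi_head ov := int H - int j, lo_head ov := int j)" for j
  have "runs w (to_nat (goto Write ov k cd ee x), P 0) (Suc H)
      (to_nat (goto Write (\<not> ov) (Suc k) cd ee x), moved (P H) stay)"
  proof (rule runs_loop)
    show "action (goto Write ov k cd ee x) (scanned w (P j)) = (goto Write ov k cd ee x, D) \<and>
      moved (P j) D = P (Suc j)" if "j < H" for j
      using that assms by (simp add: ctl_simps P_def D_def s_def scanned_eq_LEnd moved_fun_upd moved_stay
          parked_fun_upd algebra_simps)
    show "heads_inside w (P j)" if "j \<le> H" for j
    proof -
      have "0 \<le> v" "v \<le> int (length w) + 1"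
        using heads_insideD[OF assms(2), of "track_head k"] assms(3,7) by auto
      then have "0 \<le> v + s * int j \<and> v + s * int j \<le> int (length w) + 1"
        using assms(11,12) that by (auto simp: s_def v'_def)
      then show ?thesis unfolding P_def using assms that by (intro heads_inside_fun_upd) auto
    qed
  qed (use assms in \<open>simp_all add: ctl_simps P_def scanned_eq_LEnd\<close>)
  moreover have "P 0 = p" using assms by (auto simp: P_def)
  moreover have "moved (P H) stay = p(hi_head ov := 0, lo_head ov := int H, track_head k := v')"
    using assms by (auto simp: P_def s_def v'_def moved_stay parked_fun_upd fun_eq_iff)
  ultimately show ?thesis by simp
qed

lemma run_Write_done:
  fixes x :: "('s, 'g) ctl"
  assumes "parked p" "heads_inside w p" "c \<le> k"
  shows "runs w (to_nat (goto Write ov k cd ee x), p) 1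
     (to_nat (case work_move x of
                MStay \<Rightarrow> goto Read ov 0 0 False x
              | MRight \<Rightarrow> goto Double ov k cd False x
              | MLeft \<Rightarrow> goto Halve ov k cd False x), p)"
  using runs_1[of "goto Write ov k cd ee x" w p _ stay] assms
  by (cases "work_move x") (simp_all add: ctl_simps moved_stay)

lemma run_Double:
  fixes x :: "('s, 'g) ctl"
  assumes "parked p" "heads_inside w p" "p (hi_head ov) = int H" "p (lo_head ov) = 0" "0 < H"
    "2 * int H \<le> int (length w) + 1"
  shows "runs w (to_nat (goto Double ov k cd False x), p) (Suc (2 * H))
     (to_nat (goto Read (\<not> ov) 0 0 False x), p(hi_head ov := 0, lo_head ov := 2 * int H))"
proof -
  define X where "X j = goto Double ov k cd (odd j) x" for j :: nat
  define P where "P j = p(hi_head ov := int H - int ((j + 1) div 2), lo_head ov := int j)" for j :: nat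
  define D where "D j = (if odd j then stay(lo_head ov := MRight) else stay(hi_head ov := MLeft, lo_head ov := MRight))"
    for j :: nat
  have "runs w (to_nat (X 0), P 0) (Suc (2 * H)) (to_nat (goto Read (\<not> ov) 0 0 False x), moved (P (2 * H)) stay)"
  proof (rule runs_loop)
    show "action (X j) (scanned w (P j)) = (X (Suc j), D j) \<and> moved (P j) (D j) = P (Suc j)" if "j < 2 * H" for j
    proof (cases "odd j")
      case True
      then have "(Suc j + 1) div 2 = (j + 1) div 2" by presburger
      with True assms show ?thesis
        by (simp add: ctl_simps X_def P_def D_def moved_fun_upd moved_stay parked_fun_upd algebra_simps)
    next
      case False
      then have "(Suc j + 1) div 2 = Suc ((j + 1) div 2)" "(j + 1) div 2 < H" using that by presburger+
      with False assms show ?thesis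
        by (simp add: ctl_simps X_def P_def D_def scanned_eq_LEnd moved_fun_upd moved_stay parked_fun_upd
            algebra_simps)
    qed
    show "heads_inside w (P j)" if "j \<le> 2 * H" for j
      using that assms unfolding P_def by (intro heads_inside_fun_upd) auto
    have "(2 * H + 1) div 2 = H" by presburger
    then show "action (X (2 * H)) (scanned w (P (2 * H))) = (goto Read (\<not> ov) 0 0 False x, stay)"
      by (simp add: ctl_simps X_def P_def scanned_eq_LEnd)
  qed (simp add: X_def goto_def)
  moreover have "X 0 = goto Double ov k cd False x" "P 0 = p" using assms by (auto simp: X_def P_def)
  moreover have "(2 * H + 1) div 2 = H" by presburger
  ultimately show ?thesis using assms by (simp add: P_def moved_stay parked_fun_upd)
qed

text \<open>For \<open>H = 1\<close> the work head moves back into the window.\<close>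
lemma run_Halve:
  fixes x :: "('s, 'g) ctl"
  assumes "parked p" "heads_inside w p" "p (hi_head ov) = int H" "p (lo_head ov) = 0" "0 < H" "H = 1 \<or> even H"
  shows "runs w (to_nat (goto Halve ov k cd False x), p) (Suc H)
     (if H = 1 then (to_nat (Ctl Read (sim_state x) (cell0 x) (cell1 x) 1 ov 0 0 False (old_sym x) (new_sym x) (work_move x)), p)
      else (to_nat (goto Read (\<not> ov) 0 0 False x), p(hi_head ov := 0, lo_head ov := int (H div 2))))"
proof -
  define X where "X j = goto Halve ov k cd (odd j) x" for j :: nat
  define P where "P j = p(hi_head ov := int H - int j, lo_head ov := int (j div 2))" for j :: nat
  define D where "D j = stay(hi_head ov := MLeft, lo_head ov := (if odd j then MRight else MStay))" for j :: nat
  define y where "y = (if H = 1 then Ctl Read (sim_state x) (cell0 x) (cell1 x) 1 ov 0 0 False (old_sym x) (new_sym x) (work_move x)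
    else goto Read (\<not> ov) 0 0 False x)"
  define d where "d = (if H = 1 then stay(hi_head ov := MRight) else stay)"
  have "int H \<le> int (length w) + 1" using heads_insideD[OF assms(2), of "hi_head ov"] assms(3) by simp
  have "runs w (to_nat (X 0), P 0) (Suc H) (to_nat y, moved (P H) d)"
  proof (rule runs_loop)
    show "action (X j) (scanned w (P j)) = (X (Suc j), D j) \<and> moved (P j) (D j) = P (Suc j)" if "j < H" for j
    proof -
      have "Suc j div 2 = (if odd j then Suc (j div 2) else j div 2)" by presburger
      with that assms show ?thesis
        by (simp add: ctl_simps X_def P_def D_def scanned_eq_LEnd moved_fun_upd moved_stay parked_fun_upd
            algebra_simps)
    qed
    show "heads_inside w (P j)" if "j \<le> H" for j
      using that assms \<open>int H \<le> int (length w) + 1\<close> unfolding P_def by (intro heads_inside_fun_upd) auto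
    show "action (X H) (scanned w (P H)) = (y, d)"
      using assms by (auto simp: ctl_simps X_def P_def scanned_eq_LEnd y_def d_def)
  qed (simp add: X_def goto_def)
  moreover have "X 0 = goto Halve ov k cd False x" "P 0 = p" using assms by (auto simp: X_def P_def)
  ultimately have run: "runs w (to_nat (goto Halve ov k cd False x), p) (Suc H) (to_nat y, moved (P H) d)"
    by simp
  show ?thesis
  proof (cases "H = 1")
    case True
    then have "moved (P H) d = p"
      using assms by (auto simp: P_def d_def moved_fun_upd moved_stay parked_fun_upd)
    with run True show ?thesis by (simp add: y_def)
  next
    case False
    then have "moved (P H) d = p(hi_head ov := 0, lo_head ov := int (H div 2))"
      using assms by (auto simp: P_def d_def moved_stay parked_fun_upd)
    with run False show ?thesis by (simp add: y_def)
  qed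
qed

lemma run_ShiftDouble:
  fixes x :: "('s, 'g) ctl"
  assumes "parked p" "heads_inside w p" "k < c" "p (track_head k) = int v" "p aux_head = 0"
    "2 * int v \<le> int (length w) + 1"
  shows "runs w (to_nat (goto ShiftDouble ov k cd False x), p) (Suc (2 * v))
     (to_nat (goto ShiftBit ov k cd False x), p(track_head k := 0, aux_head := 2 * int v))"
proof -
  define X where "X j = goto ShiftDouble ov k cd (odd j) x" for j :: nat
  define P where "P j = p(track_head k := int v - int ((j + 1) div 2), aux_head := int j)" for j :: nat
  define D where "D j = (if odd j then stay(aux_head := MRight) else stay(track_head k := MLeft, aux_head := MRight))"
    for j :: nat
  have "runs w (to_nat (X 0), P 0) (Suc (2 * v)) (to_nat (goto ShiftBit ov k cd False x), moved (P (2 * v)) stay)"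
  proof (rule runs_loop)
    show "action (X j) (scanned w (P j)) = (X (Suc j), D j) \<and> moved (P j) (D j) = P (Suc j)" if "j < 2 * v" for j
    proof (cases "odd j")
      case True
      then have "(Suc j + 1) div 2 = (j + 1) div 2" by presburger
      with True assms show ?thesis
        by (simp add: ctl_simps X_def P_def D_def moved_fun_upd moved_stay parked_fun_upd add.commute)
    next
      case False
      then have "(Suc j + 1) div 2 = Suc ((j + 1) div 2)" "(j + 1) div 2 < v" using that by presburger+
      with False assms show ?thesis
        by (simp add: ctl_simps X_def P_def D_def scanned_eq_LEnd moved_fun_upd moved_stay parked_fun_upd
            algebra_simps)
    qed
    show "heads_inside w (P j)" if "j \<le> 2 * v" for j
      using that assms unfolding P_def by (intro heads_inside_fun_upd) auto
    have "(2 * v + 1) div 2 = v" by presburger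
    then show "action (X (2 * v)) (scanned w (P (2 * v))) = (goto ShiftBit ov k cd False x, stay)"
      using assms by (simp add: ctl_simps X_def P_def scanned_eq_LEnd)
  qed (simp add: X_def goto_def)
  moreover have "X 0 = goto ShiftDouble ov k cd False x" "P 0 = p" using assms by (auto simp: X_def P_def)
  moreover have "(2 * v + 1) div 2 = v" by presburger
  ultimately show ?thesis using assms by (simp add: P_def moved_stay parked_fun_upd)
qed

lemma run_ShiftBit:
  fixes x :: "('s, 'g) ctl"
  assumes "parked p" "heads_inside w p"
  shows "runs w (to_nat (goto ShiftBit ov k cd ee x), p) 1
     (to_nat (goto ShiftReturn ov k cd ee x), p(aux_head := p aux_head + of_bool (sym_bit (old_sym x) k)))"
  using runs_1[of "goto ShiftBit ov k cd ee x" w p "goto ShiftReturn ov k cd ee x"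
      "stay(aux_head := (if sym_bit (old_sym x) k then MRight else MStay))"] assms
  by (cases "sym_bit (old_sym x) k") (simp_all add: ctl_simps moved_fun_upd moved_stay)

lemma run_ShiftReturn:
  fixes x :: "('s, 'g) ctl"
  assumes "parked p" "heads_inside w p" "k < c" "p aux_head = int m" "p (track_head k) = 0"
    "int m \<le> int (length w) + 1"
  shows "runs w (to_nat (goto ShiftReturn ov k cd ee x), p) (Suc m)
     (to_nat (if Suc k < c then goto ShiftDouble ov (Suc k) cd False x else goto Read ov 0 0 False x),
      p(aux_head := 0, track_head k := int m))"
proof -
  define P where "P j = p(aux_head := int m - int j, track_head k := int j)" for j
  have "runs w (to_nat (goto ShiftReturn ov k cd ee x), P 0) (Suc m)
      (to_nat (if Suc k < c then goto ShiftDouble ov (Suc k) cd False x else goto Read ov 0 0 False x),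
       moved (P m) stay)"
  proof (rule runs_loop)
    show "action (goto ShiftReturn ov k cd ee x) (scanned w (P j)) =
        (goto ShiftReturn ov k cd ee x, stay(aux_head := MLeft, track_head k := MRight)) \<and>
      moved (P j) (stay(aux_head := MLeft, track_head k := MRight)) = P (Suc j)" if "j < m" for j
      using that assms by (simp add: ctl_simps P_def scanned_eq_LEnd moved_fun_upd moved_stay parked_fun_upd
          algebra_simps)
    show "heads_inside w (P j)" if "j \<le> m" for j
      using that assms unfolding P_def by (intro heads_inside_fun_upd) auto
  qed (simp_all add: ctl_simps P_def scanned_eq_LEnd)
  moreover have "P 0 = p" using assms by (auto simp: P_def)
  ultimately show ?thesis using assms by (simp add: P_def moved_stay parked_fun_upd)
qed

definition standard_pos :: "int \<Rightarrow> bool \<Rightarrow> int \<Rightarrow> (nat \<Rightarrow> nat) \<Rightarrow> nat \<Rightarrow> int" where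
  "standard_pos i ov H vs = (\<lambda>h. if h = in_head then i else if h = hi_head ov then H
     else if 5 \<le> h \<and> h < c + 5 then int (vs (h - 5)) else 0)"

lemma standard_pos_simps [simp]:
  "standard_pos i ov H vs in_head = i" "standard_pos i ov H vs (hi_head ov) = H"
  "standard_pos i ov H vs (lo_head ov) = 0" "standard_pos i ov H vs aux_head = 0"
  "k < c \<Longrightarrow> standard_pos i ov H vs (track_head k) = int (vs k)"
  by (auto simp: standard_pos_def head_defs)

lemma parked_standard_pos: "parked (standard_pos i ov H vs)"
  by (auto simp: parked_def standard_pos_def head_defs)

lemma heads_inside_standard_pos:
  assumes "0 \<le> i" "i \<le> int (length w) + 1" "0 \<le> H" "H \<le> int (length w) + 1"
    "\<And>k. k < c \<Longrightarrow> int (vs k) \<le> int (length w) + 1"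
  shows "heads_inside w (standard_pos i ov H vs)"
  using assms unfolding heads_inside_def standard_pos_def head_defs by (auto simp: less_diff_conv2)

lemma standard_pos_in_head: "(standard_pos i ov H vs)(in_head := i') = standard_pos i' ov H vs"
  by (auto simp: standard_pos_def head_defs intro!: ext)

lemma standard_pos_track: "k < c \<Longrightarrow> (standard_pos i ov H vs)(track_head k := int v) = standard_pos i ov H (vs(k := v))"
  by (auto simp: standard_pos_def head_defs intro!: ext)

lemma standard_pos_swap: "(standard_pos i ov H vs)(hi_head ov := 0, lo_head ov := H') = standard_pos i (\<not> ov) H' vs"
  by (auto simp: standard_pos_def head_defs intro!: ext)

lemma standard_pos_cong: "(\<And>k. k < c \<Longrightarrow> vs k = vs' k) \<Longrightarrow> standard_pos i ov H vs = standard_pos i ov H vs'"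
  by (auto simp: standard_pos_def intro!: ext)

lemma fa_heads_ok_standard_pos:
  assumes "heads_inside w (standard_pos i ov H vs)"
  shows "fa_heads_ok sim_fa w (q, standard_pos i' ov H vs) \<longleftrightarrow> in_range w i'"
proof -
  have "standard_pos i' ov H vs h = standard_pos i ov H vs h" if "h \<noteq> in_head" for h
    using that by (simp add: standard_pos_def)
  then show ?thesis
    using assms standard_pos_simps(1)[of i' ov H vs] head_less(1)
    unfolding fa_heads_ok_def heads_inside_def in_range_def by (metis snd_conv sim_fa_simps(1))
qed

text \<open>Reading plane \<open>k\<close>: divide, move the plane head back from the auxiliary head, and reset
  the counter pair; the parity of \<open>v\<^sub>k div H\<close> is bit \<open>k\<close> of the scanned symbol.\<close>
lemma run_read_plane:
  fixes x :: "('s, 'g) ctl" and vs :: "nat \<Rightarrow> nat" and cd :: nat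
  assumes "k < c" "window x = 2" "0 < H" "0 \<le> i" "i \<le> int (length w) + 1" "int H \<le> int (length w) + 1"
    "\<And>k. k < c \<Longrightarrow> int (vs k) \<le> int (length w) + 1"
  defines "b \<equiv> odd (vs k div H)"
  defines "cd' \<equiv> (cd + (if b then 2 ^ k else 0)) mod 2 ^ c"
  shows "runs w (to_nat (goto Read ov k cd False x), standard_pos i ov (int H) vs) (2 * vs k + vs k mod H + 3)
     (to_nat (if Suc k < c then goto Read (ov \<noteq> b) (Suc k) cd' False x else goto Decide (ov \<noteq> b) 0 cd' False x),
      standard_pos i (ov \<noteq> b) (int H) vs)"
proof -
  let ?p = "standard_pos i ov (int H) vs" and ?v = "vs k" and ?ov' = "ov \<noteq> b"
  let ?p1 = "?p(track_head k := 0, aux_head := int ?v, hi_head ?ov' := int (H - ?v mod H), lo_head ?ov' := int (?v mod H))"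
  let ?p2 = "?p1(aux_head := 0, track_head k := int ?v)"
  have inside: "heads_inside w ?p" using assms by (intro heads_inside_standard_pos) auto
  have mod_le: "int (?v mod H) \<le> int H" using \<open>0 < H\<close> by simp
  have mod_inside: "int (?v mod H) \<le> int (length w) + 1" using mod_le assms(6) by linarith
  have divide: "runs w (to_nat (goto Read ov k cd False x), ?p) (Suc ?v) (to_nat (goto ReadRestore ?ov' k cd b x), ?p1)"
    using run_Read_divide[OF parked_standard_pos inside assms(1,2,3), where ov = ov and v = ?v and ee = False and cd = cd]
      assms mod_inside unfolding b_def by (simp add: of_nat_diff)
  have inside1: "heads_inside w ?p1" using inside assms mod_inside by (intro heads_inside_fun_upd) auto
  have "runs w (to_nat (goto ReadRestore ?ov' k cd b x), ?p1) (Suc ?v)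
      (to_nat (goto ReadRewind ?ov' k cd b x), ?p1(aux_head := 0, track_head k := 0 + int ?v))"
    by (rule run_ReadRestore) (use inside1 assms in \<open>simp_all add: parked_standard_pos parked_fun_upd\<close>)
  then have restore: "runs w (to_nat (goto ReadRestore ?ov' k cd b x), ?p1) (Suc ?v)
      (to_nat (goto ReadRewind ?ov' k cd b x), ?p2)"
    by simp
  have inside2: "heads_inside w ?p2"
    by (rule heads_inside_fun_upd[OF heads_inside_fun_upd[OF inside1]]) (use assms in auto)
  have rewind: "runs w (to_nat (goto ReadRewind ?ov' k cd b x), ?p2) (Suc (?v mod H))
      (to_nat (if Suc k < c then goto Read ?ov' (Suc k) cd' False x else goto Decide ?ov' 0 cd' False x),
       ?p2(lo_head ?ov' := 0, hi_head ?ov' := int H))"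
    unfolding cd'_def
    by (rule run_ReadRewind[OF _ inside2]) (use assms in \<open>simp_all add: parked_standard_pos parked_fun_upd of_nat_diff\<close>)
  have pos: "?p2(lo_head ?ov' := 0, hi_head ?ov' := int H) = standard_pos i ?ov' (int H) vs"
    using assms(1) by (auto simp: standard_pos_def head_defs)
  have count: "Suc ?v + Suc ?v + Suc (?v mod H) = 2 * ?v + ?v mod H + 3" by simp
  show ?thesis using runs_trans[OF runs_trans[OF divide restore] rewind] by (simp only: pos count)
qed

definition read_cost :: "(nat \<Rightarrow> nat) \<Rightarrow> nat \<Rightarrow> nat \<Rightarrow> nat" where
  "read_cost vs H k = 2 * vs k + vs k mod H + 3"

lemma run_read_planes:
  fixes x :: "('s, 'g) ctl" and vs :: "nat \<Rightarrow> nat"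
  assumes "window x = 2" "0 < H" "0 \<le> i" "i \<le> int (length w) + 1" "int H \<le> int (length w) + 1"
    "\<And>k. k < c \<Longrightarrow> int (vs k) \<le> int (length w) + 1"
  obtains ov' where "runs w (to_nat (goto Read ov 0 0 False x), standard_pos i ov (int H) vs) (\<Sum>k<c. read_cost vs H k)
     (to_nat (goto Decide ov' 0 (bits_value (\<lambda>k. odd (vs k div H)) c) False x), standard_pos i ov' (int H) vs)"
proof -
  let ?code = "bits_value (\<lambda>k. odd (vs k div H))"
  have "\<exists>ov'. runs w (to_nat (goto Read ov k (?code k) False x), standard_pos i ov (int H) vs) (\<Sum>k'\<in>{k..<c}. read_cost vs H k')
     (to_nat (goto Decide ov' 0 (?code c) False x), standard_pos i ov' (int H) vs)" if "k < c" for k ov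
    using that
  proof (induction "c - k" arbitrary: k ov)
    case (Suc m)
    let ?ov' = "ov \<noteq> odd (vs k div H)"
    have "?code (Suc k) < 2 ^ Suc k" by (rule bits_value_less)
    also have "(2::nat) ^ Suc k \<le> 2 ^ c" using Suc.prems by (intro power_increasing) auto
    finally have code: "(?code k + (if odd (vs k div H) then 2 ^ k else 0)) mod 2 ^ c = ?code (Suc k)"
      by (simp add: bits_value_Suc)
    have step: "runs w (to_nat (goto Read ov k (?code k) False x), standard_pos i ov (int H) vs) (read_cost vs H k)
       (to_nat (if Suc k < c then goto Read ?ov' (Suc k) (?code (Suc k)) False x
                else goto Decide ?ov' 0 (?code (Suc k)) False x), standard_pos i ?ov' (int H) vs)"
      using run_read_plane[where vs = vs and k = k and ov = ov and cd = "?code k", OF Suc.prems assms] by (simp only: code read_cost_def)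
    show ?case
    proof (cases "Suc k < c")
      case True
      moreover have "m = c - Suc k" using Suc.hyps(2) by simp
      ultimately obtain ov'' where "runs w (to_nat (goto Read ?ov' (Suc k) (?code (Suc k)) False x), standard_pos i ?ov' (int H) vs)
          (\<Sum>k'\<in>{Suc k..<c}. read_cost vs H k') (to_nat (goto Decide ov'' 0 (?code c) False x), standard_pos i ov'' (int H) vs)"
        using Suc.hyps(1) by blast
      moreover have "(\<Sum>k'\<in>{k..<c}. read_cost vs H k') = read_cost vs H k + (\<Sum>k'\<in>{Suc k..<c}. read_cost vs H k')"
        using Suc.prems by (simp add: sum.atLeast_Suc_lessThan)
      ultimately show ?thesis using runs_trans[OF step[simplified True if_True]] by auto
    next
      case False
      then have "c = Suc k" using Suc.prems by simp
      then show ?thesis using step by auto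
    qed
  qed simp
  from this[of 0 ov] c_pos that show ?thesis by (auto simp: atLeast0LessThan)
qed

definition written_val :: "(nat \<Rightarrow> nat) \<Rightarrow> nat \<Rightarrow> 'g \<Rightarrow> 'g \<Rightarrow> nat \<Rightarrow> nat" where
  "written_val vs H g g' k =
     (if sym_bit g k = sym_bit g' k then vs k else if sym_bit g' k then vs k + H else vs k - H)"

definition write_cost :: "nat \<Rightarrow> 'g \<Rightarrow> 'g \<Rightarrow> nat \<Rightarrow> nat" where
  "write_cost H g g' k = (if sym_bit g k = sym_bit g' k then 1 else Suc H)"

lemma run_write_plane:
  fixes x :: "('s, 'g) ctl" and vs :: "nat \<Rightarrow> nat"
  defines "g \<equiv> old_sym x" and "g' \<equiv> new_sym x"
  assumes "k < c" "0 < H" "0 \<le> i" "i \<le> int (length w) + 1" "int H \<le> int (length w) + 1"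
    "\<And>k. k < c \<Longrightarrow> int (vs k) \<le> int (length w) + 1" "int (written_val vs H g g' k) \<le> int (length w) + 1"
    and erasable: "sym_bit g k \<noteq> sym_bit g' k \<Longrightarrow> \<not> sym_bit g' k \<Longrightarrow> H \<le> vs k"
  obtains ov' where "runs w (to_nat (goto Write ov k cd ee x), standard_pos i ov (int H) vs) (write_cost H g g' k)
      (to_nat (goto Write ov' (Suc k) cd ee x), standard_pos i ov' (int H) (vs(k := written_val vs H g g' k)))"
proof (cases "sym_bit g k = sym_bit g' k")
  case True
  then have "runs w (to_nat (goto Write ov k cd ee x), standard_pos i ov (int H) vs) 1
      (to_nat (goto Write ov (Suc k) cd ee x), standard_pos i ov (int H) vs)"
    using assms by (intro run_Write_keep parked_standard_pos heads_inside_standard_pos) auto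
  moreover have "vs(k := written_val vs H g g' k) = vs" using True by (auto simp: written_val_def)
  ultimately show ?thesis using True that by (simp add: write_cost_def)
next
  case False
  have new: "int (vs k) + (if sym_bit g' k then int H else - int H) = int (written_val vs H g g' k)"
    using erasable False by (auto simp: written_val_def of_nat_diff)
  have "runs w (to_nat (goto Write ov k cd ee x), standard_pos i ov (int H) vs) (Suc H)
      (to_nat (goto Write (\<not> ov) (Suc k) cd ee x),
       (standard_pos i ov (int H) vs)(hi_head ov := 0, lo_head ov := int H,
         track_head k := int (vs k) + (if sym_bit g' k then int H else - int H)))"
    using assms False new unfolding g'_def
    by (intro run_Write_flip parked_standard_pos heads_inside_standard_pos) (auto simp: g_def g'_def)
  then show ?thesis
    using False new that \<open>k < c\<close> by (simp add: write_cost_def standard_pos_swap standard_pos_track)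
qed

lemma run_write_planes:
  fixes x :: "('s, 'g) ctl" and vs :: "nat \<Rightarrow> nat"
  defines "g \<equiv> old_sym x" and "g' \<equiv> new_sym x"
  assumes "0 < H" "0 \<le> i" "i \<le> int (length w) + 1" "int H \<le> int (length w) + 1"
    and vs_inside: "\<And>k. k < c \<Longrightarrow> int (vs k) \<le> int (length w) + 1"
    and written_inside: "\<And>k. k < c \<Longrightarrow> int (written_val vs H g g' k) \<le> int (length w) + 1"
    and erasable: "\<And>k. k < c \<Longrightarrow> sym_bit g k \<noteq> sym_bit g' k \<Longrightarrow> \<not> sym_bit g' k \<Longrightarrow> H \<le> vs k"
  obtains ov' where "runs w (to_nat (goto Write ov 0 cd ee x), standard_pos i ov (int H) vs)
      (\<Sum>k<c. write_cost H g g' k) (to_nat (goto Write ov' c cd ee x), standard_pos i ov' (int H) (written_val vs H g g'))"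
proof -
  let ?new = "written_val vs H g g'"
  have "\<exists>ov'. runs w (to_nat (goto Write ov k cd ee x), standard_pos i ov (int H) us) (\<Sum>k'\<in>{k..<c}. write_cost H g g' k')
      (to_nat (goto Write ov' c cd ee x), standard_pos i ov' (int H) ?new)"
    if "k \<le> c" "\<And>k'. k' < c \<Longrightarrow> us k' = (if k' < k then ?new k' else vs k')" for k ov us
    using that
  proof (induction "c - k" arbitrary: k ov us)
    case 0
    then have "k = c" by simp
    have "standard_pos i ov (int H) us = standard_pos i ov (int H) ?new"
      using 0(3) by (intro standard_pos_cong) (simp add: \<open>k = c\<close>)
    then show ?case by (intro exI[of _ ov]) (simp add: \<open>k = c\<close>)
  next
    case (Suc m)
    then have k: "k < c" and us_k: "us k = vs k" by simp_all
    then have new_k: "written_val us H g g' k = ?new k" by (simp add: written_val_def)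
    obtain ov1 where first: "runs w (to_nat (goto Write ov k cd ee x), standard_pos i ov (int H) us)
        (write_cost H g g' k) (to_nat (goto Write ov1 (Suc k) cd ee x), standard_pos i ov1 (int H) (us(k := ?new k)))"
      using run_write_plane[where vs = us and x = x and k = k and H = H and i = i and ov = ov and cd = cd and ee = ee]
        assms k us_k Suc.prems(2) vs_inside written_inside erasable
      unfolding g_def g'_def new_k[unfolded g_def g'_def] by (metis (no_types, lifting))
    have "\<exists>ov'. runs w (to_nat (goto Write ov1 (Suc k) cd ee x), standard_pos i ov1 (int H) (us(k := ?new k)))
        (\<Sum>k'\<in>{Suc k..<c}. write_cost H g g' k') (to_nat (goto Write ov' c cd ee x), standard_pos i ov' (int H) ?new)"
      using Suc.hyps(2) Suc.prems(2) k by (intro Suc.hyps(1)) auto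
    moreover have "(\<Sum>k'\<in>{k..<c}. write_cost H g g' k') = write_cost H g g' k + (\<Sum>k'\<in>{Suc k..<c}. write_cost H g g' k')"
      using k by (simp add: sum.atLeast_Suc_lessThan)
    ultimately show ?case using runs_trans[OF first] by auto
  qed
  from this[of 0 vs ov] c_pos that show ?thesis by (auto simp: atLeast0LessThan)
qed

lemma run_shift_plane:
  fixes x :: "('s, 'g) ctl" and vs :: "nat \<Rightarrow> nat" and k :: nat
  defines "v' \<equiv> 2 * vs k + of_bool (sym_bit (old_sym x) k)"
  assumes "k < c" "0 \<le> i" "i \<le> int (length w) + 1" "\<And>k. k < c \<Longrightarrow> int (vs k) \<le> int (length w) + 1"
    "2 * int (vs k) + 1 \<le> int (length w) + 1"
  shows "runs w (to_nat (goto ShiftDouble ov k cd False x), standard_pos i ov 1 vs) (4 * vs k + of_bool (sym_bit (old_sym x) k) + 3)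
     (to_nat (if Suc k < c then goto ShiftDouble ov (Suc k) cd False x else goto Read ov 0 0 False x),
      standard_pos i ov 1 (vs(k := v')))"
proof -
  let ?p = "standard_pos i ov 1 vs"
  let ?p1 = "?p(track_head k := 0, aux_head := 2 * int (vs k))"
  let ?p2 = "?p(track_head k := 0, aux_head := int v')"
  have inside: "heads_inside w ?p" using assms by (intro heads_inside_standard_pos) auto
  have v'_inside: "int v' \<le> int (length w) + 1" using assms(6) by (simp add: v'_def)
  have double: "runs w (to_nat (goto ShiftDouble ov k cd False x), ?p) (Suc (2 * vs k)) (to_nat (goto ShiftBit ov k cd False x), ?p1)"
    using assms by (intro run_ShiftDouble parked_standard_pos inside) auto
  have inside1: "heads_inside w ?p1" using inside assms by (intro heads_inside_fun_upd) auto
  have "runs w (to_nat (goto ShiftBit ov k cd False x), ?p1) 1 (to_nat (goto ShiftReturn ov k cd False x), ?p2)"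
    using run_ShiftBit[OF _ inside1, of ov k cd False x] assms
    by (simp add: parked_standard_pos parked_fun_upd v'_def)
  moreover have "runs w (to_nat (goto ShiftReturn ov k cd False x), ?p2) (Suc v')
      (to_nat (if Suc k < c then goto ShiftDouble ov (Suc k) cd False x else goto Read ov 0 0 False x),
       ?p2(aux_head := 0, track_head k := int v'))"
    using assms v'_inside inside
    by (intro run_ShiftReturn parked_fun_upd parked_standard_pos heads_inside_fun_upd) auto
  moreover have "?p2(aux_head := 0, track_head k := int v') = standard_pos i ov 1 (vs(k := v'))"
    using assms(2) by (auto simp: standard_pos_def head_defs intro!: ext)
  moreover have "Suc (2 * vs k) + 1 + Suc v' = 4 * vs k + of_bool (sym_bit (old_sym x) k) + 3"
    by (simp add: v'_def)
  ultimately show ?thesis using runs_trans[OF runs_trans[OF double]] by metis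
qed

definition shift_cost :: "(nat \<Rightarrow> nat) \<Rightarrow> 'g \<Rightarrow> nat \<Rightarrow> nat" where
  "shift_cost vs g k = 4 * vs k + of_bool (sym_bit g k) + 3"

lemma run_shift_planes:
  fixes x :: "('s, 'g) ctl" and vs :: "nat \<Rightarrow> nat"
  defines "g \<equiv> old_sym x"
  assumes "0 \<le> i" "i \<le> int (length w) + 1" "\<And>k. k < c \<Longrightarrow> 2 * int (vs k) + 1 \<le> int (length w) + 1"
  shows "runs w (to_nat (goto ShiftDouble ov 0 cd False x), standard_pos i ov 1 vs) (\<Sum>k<c. shift_cost vs g k)
     (to_nat (goto Read ov 0 0 False x), standard_pos i ov 1 (\<lambda>k. 2 * vs k + of_bool (sym_bit g k)))"
proof -
  let ?new = "\<lambda>k. 2 * vs k + of_bool (sym_bit g k)"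
  have "runs w (to_nat (goto ShiftDouble ov k cd False x), standard_pos i ov 1 us) (\<Sum>k'\<in>{k..<c}. shift_cost vs g k')
      (to_nat (goto Read ov 0 0 False x), standard_pos i ov 1 ?new)"
    if "k < c" "\<And>k'. k' < c \<Longrightarrow> us k' = (if k' < k then ?new k' else vs k')" for k us
    using that
  proof (induction "c - k" arbitrary: k us)
    case (Suc m)
    have us_k: "us k = vs k" using Suc.prems by simp
    have "\<And>k'. k' < c \<Longrightarrow> int (us k') \<le> int (length w) + 1"
      using Suc.prems(2) assms(4) by fastforce
    then have step: "runs w (to_nat (goto ShiftDouble ov k cd False x), standard_pos i ov 1 us) (shift_cost vs g k)
        (to_nat (if Suc k < c then goto ShiftDouble ov (Suc k) cd False x else goto Read ov 0 0 False x),
         standard_pos i ov 1 (us(k := ?new k)))"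
      using run_shift_plane[where vs = us and k = k and x = x, OF Suc.prems(1) assms(2,3)] assms(4)[OF Suc.prems(1)] us_k
      by (simp add: shift_cost_def g_def)
    show ?case
    proof (cases "Suc k < c")
      case True
      have "runs w (to_nat (goto ShiftDouble ov (Suc k) cd False x), standard_pos i ov 1 (us(k := ?new k)))
          (\<Sum>k'\<in>{Suc k..<c}. shift_cost vs g k') (to_nat (goto Read ov 0 0 False x), standard_pos i ov 1 ?new)"
        using Suc.hyps(2) Suc.prems(2) True by (intro Suc.hyps(1)) auto
      moreover have "(\<Sum>k'\<in>{k..<c}. shift_cost vs g k') = shift_cost vs g k + (\<Sum>k'\<in>{Suc k..<c}. shift_cost vs g k')"
        using Suc.prems(1) by (simp add: sum.atLeast_Suc_lessThan)
      ultimately show ?thesis using runs_trans[OF step[simplified True if_True]] by simp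
    next
      case False
      then have "k = c - 1" "{k..<c} = {k}" using Suc.prems(1) by auto
      moreover have "standard_pos i ov 1 (us(k := ?new k)) = standard_pos i ov 1 ?new"
        using Suc.prems \<open>k = c - 1\<close> by (intro standard_pos_cong) auto
      ultimately show ?thesis using step False by simp
    qed
  qed simp
  from this[of 0 vs] c_pos show ?thesis by (simp add: atLeast0LessThan)
qed

lemma run_double:
  fixes x :: "('s, 'g) ctl"
  assumes "heads_inside w (standard_pos i ov (int H) vs)" "0 < H" "2 * int H \<le> int (length w) + 1"
  shows "runs w (to_nat (goto Double ov k cd False x), standard_pos i ov (int H) vs) (Suc (2 * H))
     (to_nat (goto Read (\<not> ov) 0 0 False x), standard_pos i (\<not> ov) (int (2 * H)) vs)"
  using run_Double[OF parked_standard_pos assms(1), of ov H] assms by (simp add: standard_pos_swap)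

lemma run_halve:
  fixes x :: "('s, 'g) ctl"
  assumes "heads_inside w (standard_pos i ov (int H) vs)" "0 < H" "H = 1 \<or> even H"
  shows "runs w (to_nat (goto Halve ov k cd False x), standard_pos i ov (int H) vs) (Suc H)
     (if H = 1 then (to_nat (Ctl Read (sim_state x) (cell0 x) (cell1 x) 1 ov 0 0 False (old_sym x) (new_sym x) (work_move x)),
                     standard_pos i ov (int H) vs)
      else (to_nat (goto Read (\<not> ov) 0 0 False x), standard_pos i (\<not> ov) (int (H div 2)) vs))"
proof (cases "H = 1")
  case True
  with run_Halve[OF parked_standard_pos assms(1), where ov = ov and H = H and k = k and cd = cd and x = x] assms show ?thesis
    by simp
next
  case False
  with run_Halve[OF parked_standard_pos assms(1), where ov = ov and H = H and k = k and cd = cd and x = x] assms show ?thesis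
    by (simp add: standard_pos_swap)
qed

end

locale simulated_run = simulation M c enc for M :: "('s::finite, 'a::finite, 'g::finite) tm" and c enc +
  fixes w :: "'a list"
  assumes space: "tm_space_within M w \<lfloor>log 2 (real (length w) + 2)\<rfloor>"
begin

definition cells :: nat where
  "cells = nat \<lfloor>log 2 (real (length w) + 2)\<rfloor>"

definition cfg :: "nat \<Rightarrow> ('s, 'g) tm_conf" where "cfg t = tm_conf_at M w t"
definition state_at :: "nat \<Rightarrow> 's" where "state_at t = fst (cfg t)"
definition in_pos :: "nat \<Rightarrow> int" where "in_pos t = fst (snd (cfg t))"
definition work_pos :: "nat \<Rightarrow> int" where "work_pos t = fst (snd (snd (cfg t)))"
definition work_tape :: "nat \<Rightarrow> int \<Rightarrow> 'g" where "work_tape t = snd (snd (snd (cfg t)))"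
definition trans_at :: "nat \<Rightarrow> 's \<times> move \<times> 'g \<times> move" where
  "trans_at t = tm_delta M (state_at t) (tape_at w (in_pos t)) (work_tape t (work_pos t))"

lemma cfg_eq: "cfg t = (state_at t, in_pos t, work_pos t, work_tape t)"
  by (simp add: state_at_def in_pos_def work_pos_def work_tape_def)

lemma cfg_0: "state_at 0 = tm_start M" "in_pos 0 = 0" "work_pos 0 = 0" "work_tape 0 = (\<lambda>_. tm_blank M)"
  by (simp_all add: state_at_def in_pos_def work_pos_def work_tape_def cfg_def tm_conf_at_def tm_init_def)

lemma cfg_Suc:
  assumes "trans_at t = (q', di, g', dj)"
  shows "state_at (Suc t) = q'" "in_pos (Suc t) = in_pos t + mv di" "work_pos (Suc t) = work_pos t + mv dj"
    "work_tape (Suc t) = (work_tape t)(work_pos t := g')"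
proof -
  have "cfg (Suc t) = tm_step M w (cfg t)" by (simp add: cfg_def tm_conf_at_def)
  then have "cfg (Suc t) = (q', in_pos t + mv di, work_pos t + mv dj, (work_tape t)(work_pos t := g'))"
    using assms by (simp add: cfg_eq[of t] tm_step_def trans_at_def)
  then show "state_at (Suc t) = q'" "in_pos (Suc t) = in_pos t + mv di" "work_pos (Suc t) = work_pos t + mv dj"
    "work_tape (Suc t) = (work_tape t)(work_pos t := g')"
    by (simp_all add: cfg_eq)
qed

lemma work_pos_Suc_bounds: "work_pos t - 1 \<le> work_pos (Suc t) \<and> work_pos (Suc t) \<le> work_pos t + 1"
proof -
  obtain q' di g' dj where "trans_at t = (q', di, g', dj)" by (cases "trans_at t")
  then show ?thesis by (cases dj) (simp_all add: cfg_Suc)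
qed

primrec wmin :: "nat \<Rightarrow> int" where
  "wmin 0 = 0" | "wmin (Suc t) = min (wmin t) (work_pos (Suc t))"

primrec wmax :: "nat \<Rightarrow> int" where
  "wmax 0 = 0" | "wmax (Suc t) = max (wmax t) (work_pos (Suc t))"

lemma wmin_le_work_pos: "wmin t \<le> work_pos t" and work_pos_le_wmax: "work_pos t \<le> wmax t"
  by (cases t; simp add: cfg_0)+

lemma visited_cells: "work_pos ` {..t} = {wmin t..wmax t}"
proof (induction t)
  case (Suc t)
  have "work_pos ` {..Suc t} = insert (work_pos (Suc t)) {wmin t..wmax t}"
    using Suc by (simp add: atMost_Suc)
  also have "\<dots> = {wmin (Suc t)..wmax (Suc t)}"
    using work_pos_Suc_bounds[of t] wmin_le_work_pos[of t] work_pos_le_wmax[of t] by auto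
  finally show ?case .
qed (simp add: cfg_0)

lemma work_tape_unvisited: "x < wmin t \<or> wmax t < x \<Longrightarrow> work_tape t x = tm_blank M"
proof (induction t)
  case (Suc t)
  then have "x < wmin t \<or> wmax t < x" by auto
  moreover then have "x \<noteq> work_pos t" using wmin_le_work_pos[of t] work_pos_le_wmax[of t] by auto
  moreover obtain q' di g' dj where "trans_at t = (q', di, g', dj)" by (cases "trans_at t")
  ultimately show ?case using Suc.IH by (simp add: cfg_Suc)
qed (simp add: cfg_0)

definition running :: "nat \<Rightarrow> bool" where
  "running t \<longleftrightarrow> (\<forall>j\<le>t. \<not> tm_halted M w (cfg j))"

lemma running_state:
  "running t \<Longrightarrow> state_at t \<notin> tm_acc M \<and> state_at t \<notin> tm_rej M \<and> in_range w (in_pos t)"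
  unfolding running_def tm_halted_def using cfg_eq[of t] by force

lemma cells_ge_1: "1 \<le> cells"
proof -
  have "1 \<le> log 2 (real (length w) + 2)" by (subst one_le_log_cancel_iff) auto
  then show ?thesis unfolding cells_def by linarith
qed

lemma two_pow_cells: "2 ^ cells \<le> length w + 2"
proof -
  have "(2::real) ^ nat \<lfloor>log 2 (real (length w) + 2)\<rfloor> \<le> real (length w) + 2"
    by (rule power_of_nat_log_le) auto
  then have "real (2 ^ cells) \<le> real (length w + 2)" by (simp add: cells_def)
  then show ?thesis by (simp only: of_nat_le_iff)
qed

lemma visited_width:
  assumes "\<forall>j<t. \<not> tm_halted M w (cfg j)"
  shows "wmax t - wmin t + 1 \<le> int cells"
proof -
  have "int (card (work_pos ` {..t})) \<le> \<lfloor>log 2 (real (length w) + 2)\<rfloor>"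
    using space assms unfolding tm_space_within_def cfg_def work_pos_def by blast
  moreover have "0 \<le> \<lfloor>log 2 (real (length w) + 2)\<rfloor>" using cells_ge_1 unfolding cells_def by linarith
  ultimately show ?thesis
    using wmin_le_work_pos[of t] work_pos_le_wmax[of t] by (simp add: visited_cells cells_def)
qed

lemma running_width: "running t \<Longrightarrow> wmax t - wmin t + 1 \<le> int cells"
  and running_width_Suc: "running t \<Longrightarrow> wmax (Suc t) - wmin (Suc t) + 1 \<le> int cells"
  by (rule visited_width; auto simp: running_def less_Suc_eq_le)+

definition track_val :: "nat \<Rightarrow> nat \<Rightarrow> nat" where
  "track_val t k = bits_value (\<lambda>d. sym_bit (work_tape t (wmin t + 2 + int d)) k) cells"

definition window_at :: "nat \<Rightarrow> nat" where
  "window_at t = (if work_pos t - wmin t < 2 then nat (work_pos t - wmin t) else 2)"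

definition weight_at :: "nat \<Rightarrow> nat" where
  "weight_at t = (if work_pos t - wmin t < 2 then 1 else 2 ^ nat (work_pos t - wmin t - 2))"

lemma sym_bit_blank: "\<not> sym_bit (tm_blank M) k"
  by (simp add: sym_bit_def enc_blank)

lemma track_val_less:
  assumes "running t" "wmax t - wmin t - 1 \<le> int D"
  shows "track_val t k < 2 ^ D"
  unfolding track_val_def
proof (rule bits_value_less_power)
  fix d assume "D \<le> d"
  then have "wmax t < wmin t + 2 + int d" using assms by linarith
  then show "\<not> sym_bit (work_tape t (wmin t + 2 + int d)) k" using work_tape_unvisited sym_bit_blank by simp
qed

lemma pow_less_cells: "d < cells \<Longrightarrow> (2::nat) ^ d \<le> length w + 1"
proof -
  assume "d < cells"
  then have "2 * (2::nat) ^ d \<le> 2 ^ cells" by (simp flip: power_Suc add: power_increasing)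
  then show ?thesis using two_pow_cells by linarith
qed

lemma track_val_inside: "running t \<Longrightarrow> int (track_val t k) \<le> int (length w) + 1"
  using track_val_less[of t "cells - 1" k] running_width[of t] pow_less_cells[of "cells - 1"] cells_ge_1
  by (simp add: of_nat_diff)

lemma weight_inside:
  assumes "running t"
  shows "int (weight_at t) \<le> int (length w) + 1"
proof (cases "work_pos t - wmin t < 2")
  case False
  then have "nat (work_pos t - wmin t - 2) < cells"
    using running_width[OF assms] work_pos_le_wmax[of t] by linarith
  then have "(2::nat) ^ nat (work_pos t - wmin t - 2) \<le> length w + 1" by (rule pow_less_cells)
  then have "int ((2::nat) ^ nat (work_pos t - wmin t - 2)) \<le> int (length w + 1)" by (simp only: of_nat_le_iff)
  with False show ?thesis by (simp add: weight_at_def)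
qed (simp add: weight_at_def)

lemma heads_inside_running:
  "running t \<Longrightarrow> heads_inside w (standard_pos (in_pos t) ov (int (weight_at t)) (track_val t))"
  using running_state[of t] weight_inside[of t] track_val_inside[of t]
  by (intro heads_inside_standard_pos) (auto simp: in_range_def)

definition represents :: "nat \<Rightarrow> fa_conf \<Rightarrow> bool" where
  "represents t C \<longleftrightarrow> (\<exists>ov g g' dj. C =
     (to_nat (Ctl Read (state_at t) (work_tape t (wmin t)) (work_tape t (wmin t + 1)) (window_at t) ov 0 0 False g g' dj),
      standard_pos (in_pos t) ov (int (weight_at t)) (track_val t)))"

definition continues :: "nat \<Rightarrow> fa_conf \<Rightarrow> bool" where
  "continues t C \<longleftrightarrow>
     (if tm_halted M w (cfg (Suc t))
      then fa_halted sim_fa w C \<and> (fa_accepting sim_fa w C \<longleftrightarrow> tm_accepting M w (cfg (Suc t)))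
      else represents (Suc t) C)"

section \<open>Macro steps\<close>

lemma running_Suc:
  assumes "running t" "\<not> tm_halted M w (cfg (Suc t))" "trans_at t = (q', di, g', dj)"
  shows "running (Suc t)" "q' \<notin> tm_acc M" "q' \<notin> tm_rej M" "in_range w (in_pos (Suc t))"
  using assms cfg_eq[of "Suc t"] cfg_Suc[OF assms(3)] by (auto simp: tm_halted_def running_def le_Suc_eq)

lemma halted_continues:
  assumes "tm_halted M w (cfg (Suc t))" "trans_at t = (q', di, g', dj)" "y \<in> ctl_space"
    "phase y = Accept \<longleftrightarrow> q' \<in> tm_acc M" "phase y = Reject \<longleftrightarrow> q' \<notin> tm_acc M \<and> q' \<in> tm_rej M"
    "heads_inside w (standard_pos i ov H vs)"
  shows "continues t (to_nat y, standard_pos (in_pos (Suc t)) ov H vs)"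
proof -
  let ?p' = "standard_pos (in_pos (Suc t)) ov H vs"
  have acc: "to_nat y \<in> fa_acc sim_fa \<longleftrightarrow> q' \<in> tm_acc M"
    by (simp only: to_nat_in_fa_acc[OF assms(3)] assms(4))
  have rej: "to_nat y \<in> fa_rej sim_fa \<longleftrightarrow> q' \<notin> tm_acc M \<and> q' \<in> tm_rej M"
    by (simp only: to_nat_in_fa_rej[OF assms(3)] assms(5))
  have heads: "fa_heads_ok sim_fa w (to_nat y, ?p') \<longleftrightarrow> in_range w (in_pos (Suc t))"
    by (rule fa_heads_ok_standard_pos[OF assms(6)])
  have cfg': "cfg (Suc t) = (q', in_pos (Suc t), work_pos (Suc t), work_tape (Suc t))"
    using cfg_Suc(1)[OF assms(2)] cfg_eq[of "Suc t"] by simp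
  have "q' \<in> tm_acc M \<or> q' \<in> tm_rej M \<or> \<not> in_range w (in_pos (Suc t))"
    using assms(1) by (simp only: tm_halted_def cfg' fst_conv snd_conv Un_iff disj_assoc)
  then have "fa_halted sim_fa w (to_nat y, ?p')"
    by (simp only: fa_halted_def fst_conv Un_iff acc rej heads) blast
  moreover have "fa_accepting sim_fa w (to_nat y, ?p') \<longleftrightarrow> tm_accepting M w (cfg (Suc t))"
    by (simp only: fa_accepting_def tm_accepting_def cfg' fst_conv snd_conv acc heads)
  ultimately show ?thesis
    using assms(1) by (simp add: continues_def)
qed

lemma run_decide_then:
  fixes x :: "('s, 'g) ctl" and t :: nat
  defines "g \<equiv> work_tape t (work_pos t)"
  assumes "running t" "x \<in> ctl_space" "sim_state x = state_at t" "phase x \<noteq> Accept" "phase x \<noteq> Reject"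
    and inside: "heads_inside w (standard_pos (in_pos t) ov H vs)"
    and act: "action x (scanned w (standard_pos (in_pos t) ov H vs)) = decide x (tape_at w (in_pos t)) g"
    and trans: "trans_at t = (q', di, g', dj)"
    and resumed: "\<not> tm_halted M w (cfg (Suc t)) \<Longrightarrow> \<exists>r C'. r \<le> R \<and> represents (Suc t) C' \<and>
       runs w (to_nat (resume x g q' g' dj), standard_pos (in_pos (Suc t)) ov H vs) r C'"
  shows "\<exists>r C'. r \<le> Suc R \<and> runs w (to_nat x, standard_pos (in_pos t) ov H vs) r C' \<and> continues t C'"
proof -
  define y where "y = (if q' \<in> tm_acc M then Ctl Accept q' (cell0 x) (cell1 x) (window x) (orient x) 0 0 False g g' dj
      else if q' \<in> tm_rej M then Ctl Reject q' (cell0 x) (cell1 x) (window x) (orient x) 0 0 False g g' dj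
      else resume x g q' g' dj)"
  let ?p = "standard_pos (in_pos t) ov H vs" and ?p' = "standard_pos (in_pos (Suc t)) ov H vs"
  have "tm_delta M (sim_state x) (tape_at w (in_pos t)) g = (q', di, g', dj)"
    using trans assms(4) unfolding trans_at_def g_def by simp
  then have decide: "decide x (tape_at w (in_pos t)) g = (y, stay(in_head := di))"
    unfolding decide_def y_def by simp
  have "moved ?p (stay(in_head := di)) = ?p'"
    using cfg_Suc(2)[OF trans] by (simp add: moved_fun_upd moved_stay parked_standard_pos standard_pos_in_head)
  then have first: "runs w (to_nat x, ?p) 1 (to_nat y, ?p')"
    using runs_1[OF assms(5,6) inside] act decide by metis
  show ?thesis
  proof (cases "tm_halted M w (cfg (Suc t))")
    case True
    have "y \<in> ctl_space"
      using decide_in_ctl_space[OF assms(3), of "tape_at w (in_pos t)" g] decide by simp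
    moreover have "phase y = Accept \<longleftrightarrow> q' \<in> tm_acc M" "phase y = Reject \<longleftrightarrow> q' \<notin> tm_acc M \<and> q' \<in> tm_rej M"
      unfolding y_def by (simp_all add: resume_def split: move.split)
    ultimately have "continues t (to_nat y, ?p')"
      by (rule halted_continues[OF True trans _ _ _ inside])
    with first show ?thesis by (intro exI[of _ 1] exI[of _ "(to_nat y, ?p')"]) simp
  next
    case False
    then have "y = resume x g q' g' dj" using running_Suc[OF assms(2) False trans] by (simp add: y_def)
    with resumed[OF False] obtain r C' where "r \<le> R" "runs w (to_nat y, ?p') r C'" "represents (Suc t) C'"
      by blast
    moreover have "continues t C' \<longleftrightarrow> represents (Suc t) C'"
      using False unfolding continues_def by simp
    ultimately show ?thesis using runs_trans[OF first] by fastforce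
  qed
qed

lemma represents_intro:
  assumes "state_at t = q" "work_tape t (wmin t) = a" "work_tape t (wmin t + 1) = b" "window_at t = l"
    "in_pos t = i" "int (weight_at t) = H" "track_val t = vs"
  shows "represents t (to_nat (Ctl Read q a b l ov 0 0 False g g' dj), standard_pos i ov H vs)"
  using assms unfolding represents_def by blast

lemma represents_in_ctl_space: "Ctl Read q a b (window_at t) ov 0 0 False g g' dj \<in> ctl_space"
  using c_pos by (auto simp: ctl_space_def window_at_def)

lemma track_val_cong:
  assumes "wmin t' = wmin t" "\<And>d. work_tape t' (wmin t + 2 + int d) = work_tape t (wmin t + 2 + int d)"
  shows "track_val t' = track_val t"
  unfolding track_val_def using assms by (intro ext) simp

lemma resume_window:
  "window x < 2 \<Longrightarrow> \<not> (window x = 0 \<and> dj = MLeft) \<Longrightarrow> resume x g q' g' dj =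
     Ctl Read q' (if window x = 0 then g' else cell0 x) (if window x = 1 then g' else cell1 x)
       (nat (int (window x) + mv dj)) (orient x) 0 0 False g g' dj"
  by (auto simp: resume_def split: move.split)

lemma window_step:
  assumes "trans_at t = (q', di, g', dj)" "work_pos t - wmin t < 2" "\<not> (work_pos t = wmin t \<and> dj = MLeft)"
  shows "wmin (Suc t) = wmin t" "window_at (Suc t) = nat (int (window_at t) + mv dj)" "weight_at (Suc t) = 1"
    "track_val (Suc t) = track_val t"
    "work_tape (Suc t) (wmin t) = (if window_at t = 0 then g' else work_tape t (wmin t))"
    "work_tape (Suc t) (wmin t + 1) = (if window_at t = 1 then g' else work_tape t (wmin t + 1))"
proof -
  have pos: "work_pos t = wmin t \<or> work_pos t = wmin t + 1" using assms(2) wmin_le_work_pos[of t] by linarith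
  have move: "work_pos (Suc t) = work_pos t + mv dj" by (rule cfg_Suc(3)[OF assms(1)])
  show wmin: "wmin (Suc t) = wmin t" using pos move assms(3) by (cases dj) auto
  have "work_pos (Suc t) - wmin t = work_pos t - wmin t + mv dj" using move by simp
  moreover have "work_pos (Suc t) - wmin t \<le> 2" using pos move by (cases dj) auto
  ultimately show "window_at (Suc t) = nat (int (window_at t) + mv dj)" "weight_at (Suc t) = 1"
    using assms(2) wmin_le_work_pos[of t] wmin unfolding window_at_def weight_at_def
    by (simp_all add: algebra_simps del: wmin.simps)
  show "track_val (Suc t) = track_val t"
  proof (rule track_val_cong[OF wmin])
    fix d :: nat
    have "wmin t + 2 + int d \<noteq> work_pos t" using pos by auto
    then show "work_tape (Suc t) (wmin t + 2 + int d) = work_tape t (wmin t + 2 + int d)"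
      by (simp add: cfg_Suc(4)[OF assms(1)])
  qed
  show "work_tape (Suc t) (wmin t) = (if window_at t = 0 then g' else work_tape t (wmin t))"
    "work_tape (Suc t) (wmin t + 1) = (if window_at t = 1 then g' else work_tape t (wmin t + 1))"
    using pos by (elim disjE) (auto simp: cfg_Suc(4)[OF assms(1)] window_at_def)
qed

lemma macro_step_window:
  assumes "running t" "represents t C" "work_pos t - wmin t < 2"
    "\<not> (work_pos t = wmin t \<and> snd (snd (snd (trans_at t))) = MLeft)"
  shows "\<exists>r C'. r \<le> 1 \<and> runs w C r C' \<and> continues t C'"
proof -
  obtain ov g0 g0' dj0 where C: "C = (to_nat (Ctl Read (state_at t) (work_tape t (wmin t)) (work_tape t (wmin t + 1))
      (window_at t) ov 0 0 False g0 g0' dj0), standard_pos (in_pos t) ov 1 (track_val t))"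
    using assms(2,3) unfolding represents_def by (auto simp: weight_at_def)
  let ?x = "Ctl Read (state_at t) (work_tape t (wmin t)) (work_tape t (wmin t + 1)) (window_at t) ov 0 0 False g0 g0' dj0"
  obtain q' di g' dj where trans: "trans_at t = (q', di, g', dj)" by (cases "trans_at t")
  have inside: "heads_inside w (standard_pos (in_pos t) ov 1 (track_val t))"
    using heads_inside_running[OF assms(1), of ov] assms(3) by (simp add: weight_at_def)
  have "work_pos t = wmin t \<or> work_pos t = wmin t + 1" using assms(3) wmin_le_work_pos[of t] by linarith
  then have "(if window_at t = 0 then work_tape t (wmin t) else work_tape t (wmin t + 1)) = work_tape t (work_pos t)"
    by (elim disjE) (simp_all add: window_at_def)
  moreover have "window_at t < 2" using assms(3) by (simp add: window_at_def)
  ultimately have act: "action ?x (scanned w (standard_pos (in_pos t) ov 1 (track_val t))) =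
      decide ?x (tape_at w (in_pos t)) (work_tape t (work_pos t))"
    by (auto simp: action_def scanned_in_head split: if_splits)
  have "\<exists>r C'. r \<le> Suc 0 \<and> runs w (to_nat ?x, standard_pos (in_pos t) ov 1 (track_val t)) r C' \<and> continues t C'"
  proof (rule run_decide_then[OF assms(1) represents_in_ctl_space _ _ _ inside act trans])
    assume "\<not> tm_halted M w (cfg (Suc t))"
    have "\<not> (window_at t = 0 \<and> dj = MLeft)"
      using assms(3,4) trans wmin_le_work_pos[of t] by (auto simp: window_at_def)
    then have resume: "resume ?x (work_tape t (work_pos t)) q' g' dj =
        Ctl Read q' (if window_at t = 0 then g' else work_tape t (wmin t)) (if window_at t = 1 then g' else work_tape t (wmin t + 1))
          (nat (int (window_at t) + mv dj)) ov 0 0 False (work_tape t (work_pos t)) g' dj"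
      using \<open>window_at t < 2\<close> by (simp add: resume_window)
    have "\<not> (work_pos t = wmin t \<and> dj = MLeft)" using assms(4) trans by simp
    note step = window_step[OF trans assms(3) this]
    have "represents (Suc t) (to_nat (resume ?x (work_tape t (work_pos t)) q' g' dj),
        standard_pos (in_pos (Suc t)) ov 1 (track_val t))"
      unfolding resume using step cfg_Suc(1)[OF trans]
      by (intro represents_intro) (simp_all del: wmin.simps)
    then show "\<exists>r C'. r \<le> 0 \<and> represents (Suc t) C' \<and>
        runs w (to_nat (resume ?x (work_tape t (work_pos t)) q' g' dj), standard_pos (in_pos (Suc t)) ov 1 (track_val t)) r C'"
      using runs_0 by (metis order.refl)
  qed simp_all
  then show ?thesis using C by simp
qed

lemma shift_step:
  assumes "running t" "trans_at t = (q', di, g', MLeft)" "work_pos t = wmin t"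
  shows "wmin (Suc t) = wmin t - 1" "window_at (Suc t) = 0" "weight_at (Suc t) = 1"
    "work_tape (Suc t) (wmin t - 1) = tm_blank M" "work_tape (Suc t) (wmin t) = g'"
    "track_val (Suc t) k = 2 * track_val t k + of_bool (sym_bit (work_tape t (wmin t + 1)) k)"
proof -
  have pos: "work_pos (Suc t) = wmin t - 1" using cfg_Suc(3)[OF assms(2)] assms(3) by simp
  show wmin: "wmin (Suc t) = wmin t - 1" using pos by simp
  show "window_at (Suc t) = 0" "weight_at (Suc t) = 1"
    using pos wmin by (simp_all add: window_at_def weight_at_def del: wmin.simps)
  show "work_tape (Suc t) (wmin t - 1) = tm_blank M" "work_tape (Suc t) (wmin t) = g'"
    using work_tape_unvisited[of "wmin t - 1" t] assms(3) by (simp_all add: cfg_Suc(4)[OF assms(2)])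
  define f where "f d = sym_bit (work_tape t (wmin t + 2 + int d)) k" for d
  have width: "wmax t - wmin t + 2 \<le> int cells"
    using running_width_Suc[OF assms(1)] wmin by (simp del: wmin.simps)
  then have "2 \<le> cells" using wmin_le_work_pos[of t] work_pos_le_wmax[of t] by linarith
  have "\<not> f (cells - 1)"
    using width \<open>2 \<le> cells\<close> work_tape_unvisited[of "wmin t + 2 + int (cells - 1)" t] sym_bit_blank
    by (simp add: f_def of_nat_diff)
  then have "bits_value f (Suc (cells - 1)) = bits_value f (cells - 1)"
    by (simp add: bits_value_Suc)
  then have track: "track_val t k = bits_value f (cells - 1)"
    using \<open>2 \<le> cells\<close> by (simp add: track_val_def f_def[abs_def])
  have "(\<lambda>d. sym_bit (work_tape (Suc t) (wmin (Suc t) + 2 + int d)) k) =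
      (\<lambda>d. if d = 0 then sym_bit (work_tape t (wmin t + 1)) k else f (d - 1))"
  proof
    fix d :: nat
    have "wmin t + 1 + int d \<noteq> work_pos t" using assms(3) by simp
    then show "sym_bit (work_tape (Suc t) (wmin (Suc t) + 2 + int d)) k =
        (if d = 0 then sym_bit (work_tape t (wmin t + 1)) k else f (d - 1))"
      using assms(3) by (cases d) (simp_all add: wmin cfg_Suc(4)[OF assms(2)] f_def algebra_simps del: wmin.simps)
  qed
  then have "track_val (Suc t) k = bits_value (\<lambda>d. if d = 0 then sym_bit (work_tape t (wmin t + 1)) k else f (d - 1)) (Suc (cells - 1))"
    using \<open>2 \<le> cells\<close> by (simp add: track_val_def)
  also have "\<dots> = 2 * track_val t k + of_bool (sym_bit (work_tape t (wmin t + 1)) k)"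
    using bits_value_shift[where f = f and D = "cells - 1", OF \<open>\<not> f (cells - 1)\<close>] track by simp
  finally show "track_val (Suc t) k = 2 * track_val t k + of_bool (sym_bit (work_tape t (wmin t + 1)) k)" .
qed

lemma shift_numbers:
  assumes "running t" "trans_at t = (q', di, g', MLeft)" "work_pos t = wmin t"
  shows "4 * track_val t k + 4 \<le> length w + 2"
proof -
  have width: "wmax t - wmin t + 2 \<le> int cells"
    using running_width_Suc[OF assms(1)] shift_step(1)[OF assms] by (simp del: wmin.simps)
  then have "2 \<le> cells" using wmin_le_work_pos[of t] work_pos_le_wmax[of t] by linarith
  have "track_val t k < 2 ^ (cells - 2)"
    using width by (intro track_val_less[OF assms(1)]) (simp add: of_nat_diff \<open>2 \<le> cells\<close>)
  moreover have "(2::nat) ^ cells = 2 ^ 2 * 2 ^ (cells - 2)"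
    using \<open>2 \<le> cells\<close> by (simp only: power_add[symmetric] le_add_diff_inverse)
  then have "4 * (2::nat) ^ (cells - 2) = 2 ^ cells" by simp
  ultimately show ?thesis using two_pow_cells by linarith
qed

lemma macro_step_shift:
  assumes "running t" "represents t C" "work_pos t = wmin t" "snd (snd (snd (trans_at t))) = MLeft"
  shows "\<exists>r C'. r \<le> Suc (c * (length w + 2)) \<and> runs w C r C' \<and> continues t C'"
proof -
  obtain ov g0 g0' dj0 where C: "C = (to_nat (Ctl Read (state_at t) (work_tape t (wmin t)) (work_tape t (wmin t + 1))
      0 ov 0 0 False g0 g0' dj0), standard_pos (in_pos t) ov 1 (track_val t))"
    using assms(2,3) unfolding represents_def by (auto simp: weight_at_def window_at_def)
  let ?x = "Ctl Read (state_at t) (work_tape t (wmin t)) (work_tape t (wmin t + 1)) 0 ov 0 0 False g0 g0' dj0"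
  let ?b = "work_tape t (wmin t + 1)"
  obtain q' di g' where trans: "trans_at t = (q', di, g', MLeft)" using assms(4) by (cases "trans_at t") auto
  have inside: "heads_inside w (standard_pos (in_pos t) ov 1 (track_val t))"
    using heads_inside_running[OF assms(1), of ov] assms(3) by (simp add: weight_at_def)
  have act: "action ?x (scanned w (standard_pos (in_pos t) ov 1 (track_val t))) =
      decide ?x (tape_at w (in_pos t)) (work_tape t (work_pos t))"
    using assms(3) by (simp add: action_def scanned_in_head)
  note small = shift_numbers[OF assms(1) trans assms(3)]
  have fit: "2 * int (track_val t k) + 1 \<le> int (length w) + 1" for k
  proof -
    have "2 * track_val t k \<le> length w" using small[of k] by linarith
    then have "int (2 * track_val t k) \<le> int (length w)" by (simp only: of_nat_le_iff)
    then show ?thesis by simp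
  qed
  have "\<exists>r C'. r \<le> Suc (\<Sum>k<c. shift_cost (track_val t) ?b k) \<and>
      runs w (to_nat ?x, standard_pos (in_pos t) ov 1 (track_val t)) r C' \<and> continues t C'"
  proof (rule run_decide_then[OF assms(1) _ _ _ _ inside act trans])
    assume "\<not> tm_halted M w (cfg (Suc t))"
    note running_Suc[OF assms(1) this trans]
    let ?y = "Ctl ShiftDouble q' (tm_blank M) g' 0 ov 0 0 False ?b g' MLeft"
    have "runs w (to_nat (goto ShiftDouble ov 0 0 False ?y), standard_pos (in_pos (Suc t)) ov 1 (track_val t))
        (\<Sum>k<c. shift_cost (track_val t) (old_sym ?y) k)
        (to_nat (goto Read ov 0 0 False ?y), standard_pos (in_pos (Suc t)) ov 1 (\<lambda>k. 2 * track_val t k + of_bool (sym_bit (old_sym ?y) k)))"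
      using \<open>in_range w (in_pos (Suc t))\<close> fit by (intro run_shift_planes) (auto simp: in_range_def)
    moreover have "represents (Suc t) (to_nat (goto Read ov 0 0 False ?y),
        standard_pos (in_pos (Suc t)) ov 1 (\<lambda>k. 2 * track_val t k + of_bool (sym_bit ?b k)))"
      unfolding goto_def ctl.sel using shift_step[OF assms(1) trans assms(3)] cfg_Suc(1)[OF trans]
      by (intro represents_intro) (simp_all add: fun_eq_iff del: wmin.simps)
    moreover have "resume ?x (work_tape t (work_pos t)) q' g' MLeft = ?y"
      by (simp add: resume_def)
    ultimately show "\<exists>r C'. r \<le> (\<Sum>k<c. shift_cost (track_val t) ?b k) \<and> represents (Suc t) C' \<and>
        runs w (to_nat (resume ?x (work_tape t (work_pos t)) q' g' MLeft), standard_pos (in_pos (Suc t)) ov 1 (track_val t)) r C'"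
      by (auto simp: goto_def)
  qed (use c_pos in \<open>simp_all add: ctl_space_def\<close>)
  moreover have "shift_cost (track_val t) ?b k \<le> length w + 2" for k
    using small[of k] by (cases "sym_bit ?b k") (simp_all add: shift_cost_def)
  then have "(\<Sum>k<c. shift_cost (track_val t) ?b k) \<le> c * (length w + 2)"
    using sum_bounded_above[of "{..<c}" "shift_cost (track_val t) ?b" "length w + 2"] by simp
  ultimately show ?thesis using C by (meson Suc_le_mono order.trans)
qed

lemma sym_of_code_bits: "sym_of_code (bits_value (sym_bit g) c) = g"
proof -
  have "bits_value (sym_bit g) c = enc g"
    unfolding sym_bit_def by (rule bits_value_of_nat[OF enc_less])
  then show ?thesis by (simp add: sym_of_code_def enc_inj)
qed

lemma track_case:
  assumes "\<not> work_pos t - wmin t < 2"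
  shows "window_at t = 2" "weight_at t = 2 ^ nat (work_pos t - wmin t - 2)"
    "work_pos t = wmin t + 2 + int (nat (work_pos t - wmin t - 2))"
  using assms by (simp_all add: window_at_def weight_at_def)

lemma odd_track_val_div_weight:
  assumes "running t" "\<not> work_pos t - wmin t < 2"
  shows "odd (track_val t k div weight_at t) \<longleftrightarrow> sym_bit (work_tape t (work_pos t)) k"
proof -
  have "nat (work_pos t - wmin t - 2) < cells"
    using assms running_width[OF assms(1)] work_pos_le_wmax[of t] by linarith
  then show ?thesis
    unfolding track_val_def track_case(2)[OF assms(2)] using track_case(3)[OF assms(2)]
    by (simp add: odd_bits_value_div)
qed

lemma track_step:
  assumes "running t" "trans_at t = (q', di, g', dj)" "\<not> work_pos t - wmin t < 2"
  defines "H \<equiv> weight_at t"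
  shows "wmin (Suc t) = wmin t" "work_tape (Suc t) (wmin t) = work_tape t (wmin t)"
    "work_tape (Suc t) (wmin t + 1) = work_tape t (wmin t + 1)"
    "track_val (Suc t) = written_val (track_val t) H (work_tape t (work_pos t)) g'"
    "dj = MStay \<Longrightarrow> window_at (Suc t) = 2 \<and> weight_at (Suc t) = H"
    "dj = MRight \<Longrightarrow> window_at (Suc t) = 2 \<and> weight_at (Suc t) = 2 * H"
    "dj = MLeft \<Longrightarrow> H = 1 \<Longrightarrow> window_at (Suc t) = 1 \<and> weight_at (Suc t) = 1"
    "dj = MLeft \<Longrightarrow> H \<noteq> 1 \<Longrightarrow> window_at (Suc t) = 2 \<and> weight_at (Suc t) = H div 2"
proof -
  define d0 where "d0 = nat (work_pos t - wmin t - 2)"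
  have H: "H = 2 ^ d0" and pos: "work_pos t = wmin t + 2 + int d0"
    using track_case[OF assms(3)] by (simp_all add: H_def d0_def)
  have move: "work_pos (Suc t) = work_pos t + mv dj" by (rule cfg_Suc(3)[OF assms(2)])
  show wmin: "wmin (Suc t) = wmin t" using move pos by (cases dj) auto
  show "work_tape (Suc t) (wmin t) = work_tape t (wmin t)" "work_tape (Suc t) (wmin t + 1) = work_tape t (wmin t + 1)"
    using pos by (simp_all add: cfg_Suc(4)[OF assms(2)])
  show "track_val (Suc t) = written_val (track_val t) H (work_tape t (work_pos t)) g'"
  proof
    fix k
    define f where "f d = sym_bit (work_tape t (wmin t + 2 + int d)) k" for d
    define f' where "f' d = sym_bit (work_tape (Suc t) (wmin t + 2 + int d)) k" for d
    have "d0 < cells" using assms(1,3) running_width[OF assms(1)] work_pos_le_wmax[of t] by (simp add: d0_def)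
    moreover have "f' d = f d" if "d \<noteq> d0" for d using that pos by (simp add: f_def f'_def cfg_Suc(4)[OF assms(2)])
    ultimately have "bits_value f' cells + (if f d0 then 2 ^ d0 else 0) = bits_value f cells + (if f' d0 then 2 ^ d0 else 0)"
      by (rule bits_value_update)
    moreover have "f d0 = sym_bit (work_tape t (work_pos t)) k" "f' d0 = sym_bit g' k"
      using pos by (simp_all add: f_def f'_def cfg_Suc(4)[OF assms(2)])
    moreover have "track_val (Suc t) k = bits_value f' cells" "track_val t k = bits_value f cells"
      using wmin by (simp_all add: track_val_def f_def[abs_def] f'_def[abs_def] del: wmin.simps)
    ultimately show "track_val (Suc t) k = written_val (track_val t) H (work_tape t (work_pos t)) g' k"
      by (auto simp: written_val_def H)
  qed
  show "dj = MStay \<Longrightarrow> window_at (Suc t) = 2 \<and> weight_at (Suc t) = H"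
    "dj = MRight \<Longrightarrow> window_at (Suc t) = 2 \<and> weight_at (Suc t) = 2 * H"
    using move pos wmin by (simp_all add: window_at_def weight_at_def H nat_add_distrib del: wmin.simps)
  show "dj = MLeft \<Longrightarrow> H = 1 \<Longrightarrow> window_at (Suc t) = 1 \<and> weight_at (Suc t) = 1"
    using move pos wmin by (simp add: window_at_def weight_at_def H del: wmin.simps)
  show "dj = MLeft \<Longrightarrow> H \<noteq> 1 \<Longrightarrow> window_at (Suc t) = 2 \<and> weight_at (Suc t) = H div 2"
    using move pos wmin by (cases d0) (simp_all add: window_at_def weight_at_def H del: wmin.simps)
qed

lemma weight_le_erased_plane:
  assumes "running t" "\<not> work_pos t - wmin t < 2" "sym_bit (work_tape t (work_pos t)) k"
  shows "weight_at t \<le> track_val t k"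
proof -
  have "odd (track_val t k div weight_at t)" using odd_track_val_div_weight[OF assms(1,2)] assms(3) by simp
  then have "track_val t k div weight_at t \<noteq> 0" by (metis even_zero)
  then show ?thesis by (simp add: div_eq_0_iff not_less weight_at_def)
qed

lemma run_track_write:
  fixes t :: nat and ov :: bool
  assumes "running t" "\<not> tm_halted M w (cfg (Suc t))" "trans_at t = (q', di, g', dj)" "\<not> work_pos t - wmin t < 2"
  defines "H \<equiv> weight_at t" and "g \<equiv> work_tape t (work_pos t)"
  defines "y \<equiv> Ctl Write q' (work_tape t (wmin t)) (work_tape t (wmin t + 1)) 2 ov 0 0 False g g' dj"
  obtains ov' where "runs w (to_nat y, standard_pos (in_pos (Suc t)) ov (int H) (track_val t)) (Suc (\<Sum>k<c. write_cost H g g' k))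
      (to_nat (case dj of MStay \<Rightarrow> goto Read ov' 0 0 False y | MRight \<Rightarrow> goto Double ov' c 0 False y
               | MLeft \<Rightarrow> goto Halve ov' c 0 False y), standard_pos (in_pos (Suc t)) ov' (int H) (track_val (Suc t)))"
    "heads_inside w (standard_pos (in_pos (Suc t)) ov' (int H) (track_val (Suc t)))"
proof -
  note after = running_Suc[OF assms(1-3)]
  have "0 < H" by (simp add: H_def weight_at_def)
  have H_inside: "int H \<le> int (length w) + 1" using weight_inside[OF assms(1)] by (simp add: H_def)
  have in_inside: "0 \<le> in_pos (Suc t)" "in_pos (Suc t) \<le> int (length w) + 1"
    using after(4) by (simp_all add: in_range_def)
  obtain ov' where writing: "runs w (to_nat (goto Write ov 0 0 False y), standard_pos (in_pos (Suc t)) ov (int H) (track_val t))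
      (\<Sum>k<c. write_cost H g g' k) (to_nat (goto Write ov' c 0 False y), standard_pos (in_pos (Suc t)) ov' (int H) (track_val (Suc t)))"
    using run_write_planes[where w = w and H = H and i = "in_pos (Suc t)" and vs = "track_val t" and x = y and ov = ov
        and cd = 0 and ee = False] \<open>0 < H\<close> in_inside H_inside track_val_inside[OF assms(1)] track_val_inside[OF after(1)]
      weight_le_erased_plane[OF assms(1,4)] track_step(4)[OF assms(1,3,4)]
    by (auto simp: y_def H_def g_def)
  have inside': "heads_inside w (standard_pos (in_pos (Suc t)) ov' (int H) (track_val (Suc t)))"
    using in_inside H_inside track_val_inside[OF after(1)] by (intro heads_inside_standard_pos) auto
  have "runs w (to_nat (goto Write ov' c 0 False y), standard_pos (in_pos (Suc t)) ov' (int H) (track_val (Suc t))) 1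
      (to_nat (case dj of MStay \<Rightarrow> goto Read ov' 0 0 False y | MRight \<Rightarrow> goto Double ov' c 0 False y
               | MLeft \<Rightarrow> goto Halve ov' c 0 False y), standard_pos (in_pos (Suc t)) ov' (int H) (track_val (Suc t)))"
    using run_Write_done[OF parked_standard_pos inside', where k = c and ov = ov' and cd = 0 and ee = False and x = y]
    by (simp add: y_def)
  from runs_trans[OF writing this] have "runs w (to_nat y, standard_pos (in_pos (Suc t)) ov (int H) (track_val t))
      (Suc (\<Sum>k<c. write_cost H g g' k))
      (to_nat (case dj of MStay \<Rightarrow> goto Read ov' 0 0 False y | MRight \<Rightarrow> goto Double ov' c 0 False y
               | MLeft \<Rightarrow> goto Halve ov' c 0 False y), standard_pos (in_pos (Suc t)) ov' (int H) (track_val (Suc t)))"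
    by (simp add: y_def goto_def)
  then show ?thesis using that inside' by blast
qed

lemma run_track_move:
  fixes t :: nat and ov ov' :: bool
  assumes "running t" "\<not> tm_halted M w (cfg (Suc t))" "trans_at t = (q', di, g', dj)" "\<not> work_pos t - wmin t < 2"
  defines "H \<equiv> weight_at t" and "g \<equiv> work_tape t (work_pos t)"
  defines "y \<equiv> Ctl Write q' (work_tape t (wmin t)) (work_tape t (wmin t + 1)) 2 ov 0 0 False g g' dj"
  assumes inside': "heads_inside w (standard_pos (in_pos (Suc t)) ov' (int H) (track_val (Suc t)))"
  shows "\<exists>r C'. r \<le> Suc (2 * H) \<and> represents (Suc t) C' \<and>
    runs w (to_nat (case dj of MStay \<Rightarrow> goto Read ov' 0 0 False y | MRight \<Rightarrow> goto Double ov' c 0 False y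
             | MLeft \<Rightarrow> goto Halve ov' c 0 False y), standard_pos (in_pos (Suc t)) ov' (int H) (track_val (Suc t))) r C'"
proof -
  note step = track_step[OF assms(1,3,4), folded H_def g_def]
  note after = running_Suc[OF assms(1-3)]
  have "0 < H" by (simp add: H_def weight_at_def)
  have common: "state_at (Suc t) = q'" "wmin (Suc t) = wmin t"
    using cfg_Suc(1)[OF assms(3)] step(1) by simp_all
  show ?thesis
  proof (cases dj)
    case MStay
    have "represents (Suc t) (to_nat (goto Read ov' 0 0 False y), standard_pos (in_pos (Suc t)) ov' (int H) (track_val (Suc t)))"
      unfolding goto_def y_def ctl.sel using common step(2,3) step(5)[OF MStay]
      by (intro represents_intro) (simp_all del: wmin.simps)
    with MStay show ?thesis
      by (intro exI[of _ 0] exI[of _ "(to_nat (goto Read ov' 0 0 False y),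
          standard_pos (in_pos (Suc t)) ov' (int H) (track_val (Suc t)))"]) simp
  next
    case MRight
    have "runs w (to_nat (goto Double ov' c 0 False y), standard_pos (in_pos (Suc t)) ov' (int H) (track_val (Suc t)))
        (Suc (2 * H)) (to_nat (goto Read (\<not> ov') 0 0 False y), standard_pos (in_pos (Suc t)) (\<not> ov') (int (2 * H)) (track_val (Suc t)))"
      using weight_inside[OF after(1)] step(6)[OF MRight] \<open>0 < H\<close> by (intro run_double inside') simp_all
    moreover have "represents (Suc t) (to_nat (goto Read (\<not> ov') 0 0 False y), standard_pos (in_pos (Suc t)) (\<not> ov') (int (2 * H)) (track_val (Suc t)))"
      unfolding goto_def y_def ctl.sel using common step(2,3) step(6)[OF MRight]
      by (intro represents_intro) (simp_all del: wmin.simps)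
    ultimately show ?thesis using MRight by (intro exI[of _ "Suc (2 * H)"] exI) auto
  next
    case MLeft
    have "H = 1 \<or> even H"
      using assms(4) by (cases "nat (work_pos t - wmin t - 2)") (simp_all add: H_def weight_at_def)
    note halve = run_halve[OF inside' \<open>0 < H\<close> this, where k = c and cd = 0 and x = y]
    show ?thesis
    proof (cases "H = 1")
      case True
      have "represents (Suc t) (to_nat (Ctl Read q' (work_tape t (wmin t)) (work_tape t (wmin t + 1)) 1 ov' 0 0 False g g' dj),
          standard_pos (in_pos (Suc t)) ov' (int H) (track_val (Suc t)))"
        using common step(2,3) step(7)[OF MLeft True] True by (intro represents_intro) (simp_all del: wmin.simps)
      with halve True MLeft show ?thesis by (intro exI[of _ "Suc H"] exI) (auto simp: y_def)
    next
      case False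
      have "represents (Suc t) (to_nat (goto Read (\<not> ov') 0 0 False y), standard_pos (in_pos (Suc t)) (\<not> ov') (int (H div 2)) (track_val (Suc t)))"
        unfolding goto_def y_def ctl.sel using common step(2,3) step(8)[OF MLeft False]
        by (intro represents_intro) (simp_all del: wmin.simps)
      with halve False MLeft show ?thesis by (intro exI[of _ "Suc H"] exI) auto
    qed
  qed
qed

lemma run_track_update:
  fixes t :: nat and ov :: bool
  assumes "running t" "\<not> tm_halted M w (cfg (Suc t))" "trans_at t = (q', di, g', dj)" "\<not> work_pos t - wmin t < 2"
  defines "H \<equiv> weight_at t" and "g \<equiv> work_tape t (work_pos t)"
  defines "y \<equiv> Ctl Write q' (work_tape t (wmin t)) (work_tape t (wmin t + 1)) 2 ov 0 0 False g g' dj"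
  shows "\<exists>r C'. r \<le> (\<Sum>k<c. write_cost H g g' k) + Suc (Suc (2 * H)) \<and> represents (Suc t) C' \<and>
     runs w (to_nat y, standard_pos (in_pos (Suc t)) ov (int H) (track_val t)) r C'"
proof -
  obtain ov' where writing: "runs w (to_nat y, standard_pos (in_pos (Suc t)) ov (int H) (track_val t)) (Suc (\<Sum>k<c. write_cost H g g' k))
      (to_nat (case dj of MStay \<Rightarrow> goto Read ov' 0 0 False y | MRight \<Rightarrow> goto Double ov' c 0 False y
               | MLeft \<Rightarrow> goto Halve ov' c 0 False y), standard_pos (in_pos (Suc t)) ov' (int H) (track_val (Suc t)))"
    and inside': "heads_inside w (standard_pos (in_pos (Suc t)) ov' (int H) (track_val (Suc t)))"
    using run_track_write[OF assms(1-4)] unfolding H_def g_def y_def by blast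
  obtain r C' where "r \<le> Suc (2 * H)" "represents (Suc t) C'"
    "runs w (to_nat (case dj of MStay \<Rightarrow> goto Read ov' 0 0 False y | MRight \<Rightarrow> goto Double ov' c 0 False y
             | MLeft \<Rightarrow> goto Halve ov' c 0 False y), standard_pos (in_pos (Suc t)) ov' (int H) (track_val (Suc t))) r C'"
    using run_track_move[OF assms(1-4) inside'[unfolded H_def]] unfolding H_def g_def y_def by blast
  with runs_trans[OF writing] show ?thesis
    by (intro exI[of _ "Suc (\<Sum>k<c. write_cost H g g' k) + r"] exI[of _ C']) auto
qed

lemma macro_step_track:
  assumes "running t" "represents t C" "\<not> work_pos t - wmin t < 2"
  defines "H \<equiv> weight_at t" and "g \<equiv> work_tape t (work_pos t)"
  obtains r C' g' where "runs w C r C'" "continues t C'"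
    "r \<le> (\<Sum>k<c. read_cost (track_val t) H k) + Suc ((\<Sum>k<c. write_cost H g g' k) + Suc (Suc (2 * H)))"
proof -
  obtain ov g0 g0' dj0 where C: "C = (to_nat (Ctl Read (state_at t) (work_tape t (wmin t)) (work_tape t (wmin t + 1))
      2 ov 0 0 False g0 g0' dj0), standard_pos (in_pos t) ov (int H) (track_val t))"
    using assms(2,3) unfolding represents_def H_def by (auto simp: window_at_def)
  let ?x = "Ctl Read (state_at t) (work_tape t (wmin t)) (work_tape t (wmin t + 1)) 2 ov 0 0 False g0 g0' dj0"
  let ?code = "bits_value (\<lambda>k. odd (track_val t k div H)) c"
  obtain q' di g' dj where trans: "trans_at t = (q', di, g', dj)" by (cases "trans_at t")
  have "0 < H" by (simp add: H_def weight_at_def)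
  have in_inside: "0 \<le> in_pos t" "in_pos t \<le> int (length w) + 1"
    using running_state[OF assms(1)] by (simp_all add: in_range_def)
  obtain ov1 where read: "runs w (to_nat (goto Read ov 0 0 False ?x), standard_pos (in_pos t) ov (int H) (track_val t))
      (\<Sum>k<c. read_cost (track_val t) H k) (to_nat (goto Decide ov1 0 ?code False ?x), standard_pos (in_pos t) ov1 (int H) (track_val t))"
    using run_read_planes[where w = w and x = ?x and H = H and i = "in_pos t" and vs = "track_val t" and ov = ov]
      \<open>0 < H\<close> in_inside weight_inside[OF assms(1)] track_val_inside[OF assms(1)] by (auto simp: H_def)
  let ?x1 = "goto Decide ov1 0 ?code False ?x"
  have "?code = bits_value (sym_bit g) c"
    unfolding bits_value_def using odd_track_val_div_weight[OF assms(1,3)] by (simp add: H_def g_def)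
  then have act: "action ?x1 (scanned w (standard_pos (in_pos t) ov1 (int H) (track_val t))) = decide ?x1 (tape_at w (in_pos t)) g"
    by (simp add: action_def goto_def scanned_in_head sym_of_code_bits)
  have "?x1 \<in> ctl_space" using bits_value_less[of _ c] by (simp add: ctl_space_def goto_def)
  have "\<exists>r C'. r \<le> Suc ((\<Sum>k<c. write_cost H g g' k) + Suc (Suc (2 * H))) \<and>
      runs w (to_nat ?x1, standard_pos (in_pos t) ov1 (int H) (track_val t)) r C' \<and> continues t C'"
  proof (rule run_decide_then[OF assms(1) \<open>?x1 \<in> ctl_space\<close> _ _ _ _ act[unfolded g_def] trans, folded g_def])
    show "heads_inside w (standard_pos (in_pos t) ov1 (int H) (track_val t))"
      using heads_inside_running[OF assms(1)] by (simp add: H_def)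
    assume "\<not> tm_halted M w (cfg (Suc t))"
    then show "\<exists>r C'. r \<le> (\<Sum>k<c. write_cost H g g' k) + Suc (Suc (2 * H)) \<and> represents (Suc t) C' \<and>
        runs w (to_nat (resume ?x1 g q' g' dj), standard_pos (in_pos (Suc t)) ov1 (int H) (track_val t)) r C'"
      using run_track_update[OF assms(1) _ trans assms(3), of ov1] by (simp add: resume_def goto_def H_def g_def)
  qed (simp_all add: goto_def)
  then obtain r C' where "r \<le> Suc ((\<Sum>k<c. write_cost H g g' k) + Suc (Suc (2 * H)))"
    "runs w (to_nat ?x1, standard_pos (in_pos t) ov1 (int H) (track_val t)) r C'" "continues t C'"
    by blast
  moreover have "goto Read ov 0 0 False ?x = ?x" by (simp add: goto_def)
  ultimately show ?thesis using that[of _ C' g'] runs_trans[OF read] C by fastforce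
qed

lemma track_numbers:
  assumes "running t" "\<not> work_pos t - wmin t < 2"
  defines "X \<equiv> 2 ^ (cells - 2) :: nat"
  shows "4 * X \<le> length w + 2" "6 \<le> length w" "2 * weight_at t \<le> X" "track_val t k < X"
proof -
  define d0 where "d0 = nat (work_pos t - wmin t - 2)"
  have width: "d0 + 3 \<le> cells"
    using assms(2) running_width[OF assms(1)] work_pos_le_wmax[of t] by (simp add: d0_def)
  have "cells = 2 + (cells - 2)" using width by simp
  then have "(2::nat) ^ cells = 2 ^ 2 * X" unfolding X_def by (metis power_add)
  then show four_X: "4 * X \<le> length w + 2" using two_pow_cells by simp
  have "(2::nat) ^ 3 \<le> 2 ^ cells" using width by (intro power_increasing) auto
  then show "6 \<le> length w" using two_pow_cells by simp
  have "(2::nat) ^ Suc d0 \<le> X" using width unfolding X_def by (intro power_increasing) auto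
  then show "2 * weight_at t \<le> X" using assms(2) by (simp add: weight_at_def d0_def)
  show "track_val t k < X"
    unfolding X_def using assms(2) running_width[OF assms(1)] wmin_le_work_pos[of t]
    by (intro track_val_less[OF assms(1)]) (simp add: of_nat_diff)
qed

lemma track_cost_bound:
  fixes rc wc :: "nat \<Rightarrow> nat" and X H n :: nat
  assumes "\<And>k. k < c \<Longrightarrow> rc k + wc k \<le> 3 * X + 1" "2 * H \<le> X" "4 * X \<le> n + 2" "6 \<le> n"
  shows "4 * ((\<Sum>k<c. rc k) + Suc ((\<Sum>k<c. wc k) + Suc (Suc (2 * H)))) \<le> (8 * c + 6) * n + 8 * c + 4"
proof -
  have "(\<Sum>k<c. rc k) + (\<Sum>k<c. wc k) = (\<Sum>k<c. rc k + wc k)" by (simp add: sum.distrib)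
  also have "\<dots> \<le> c * (3 * X + 1)" using sum_bounded_above[of "{..<c}" "\<lambda>k. rc k + wc k" "3 * X + 1"] assms(1) by simp
  finally have sum: "(\<Sum>k<c. rc k) + (\<Sum>k<c. wc k) \<le> 3 * (c * X) + c" by (simp add: algebra_simps)
  have "c * (4 * X) \<le> c * (n + 2)" using assms(3) by (rule mult_le_mono2)
  then have "4 * ((\<Sum>k<c. rc k) + (\<Sum>k<c. wc k)) \<le> 3 * (c * n) + 10 * c"
    using sum by (simp add: algebra_simps)
  moreover have "6 * c \<le> c * n" using assms(4) by simp
  moreover have "(8 * c + 6) * n = 8 * (c * n) + 6 * n" by (simp add: algebra_simps)
  moreover have "4 * ((\<Sum>k<c. rc k) + Suc ((\<Sum>k<c. wc k) + Suc (Suc (2 * H)))) =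
      4 * ((\<Sum>k<c. rc k) + (\<Sum>k<c. wc k)) + 8 * H + 12" by simp
  ultimately show ?thesis using assms(2,3,4) by linarith
qed

definition step_bound :: real where
  "step_bound = (2 * real c + 3 / 2) * real (length w) + 2 * real c + 1"

lemma macro_step:
  assumes "running t" "represents t C"
  obtains r C' where "real r \<le> step_bound" "runs w C r C'" "continues t C'"
proof (cases "work_pos t - wmin t < 2")
  case True
  show ?thesis
  proof (cases "work_pos t = wmin t \<and> snd (snd (snd (trans_at t))) = MLeft")
    case True
    then obtain r C' where "r \<le> Suc (c * (length w + 2))" "runs w C r C'" "continues t C'"
      using macro_step_shift[OF assms] by blast
    moreover have "real r \<le> real (Suc (c * (length w + 2)))"
      using \<open>r \<le> Suc (c * (length w + 2))\<close> by (simp only: of_nat_le_iff)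
    moreover have "real (Suc (c * (length w + 2))) \<le> step_bound"
      by (simp add: step_bound_def algebra_simps)
    ultimately have "real r \<le> step_bound" by linarith
    then show ?thesis using \<open>runs w C r C'\<close> \<open>continues t C'\<close> by (rule that)
  next
    case False
    then obtain r C' where "r \<le> 1" "runs w C r C'" "continues t C'"
      using macro_step_window[OF assms \<open>work_pos t - wmin t < 2\<close>] by blast
    moreover have "1 \<le> step_bound" by (simp add: step_bound_def)
    ultimately have "real r \<le> step_bound" by linarith
    then show ?thesis using \<open>runs w C r C'\<close> \<open>continues t C'\<close> by (rule that)
  qed
next
  case False
  let ?H = "weight_at t" and ?g = "work_tape t (work_pos t)" and ?X = "2 ^ (cells - 2) :: nat"
  obtain r C' g' where run: "runs w C r C'" "continues t C'"
    and r: "r \<le> (\<Sum>k<c. read_cost (track_val t) ?H k) + Suc ((\<Sum>k<c. write_cost ?H ?g g' k) + Suc (Suc (2 * ?H)))"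
    using macro_step_track[OF assms False] by blast
  note numbers = track_numbers[OF assms(1) False]
  have "read_cost (track_val t) ?H k + write_cost ?H ?g g' k \<le> 3 * ?X + 1" for k
  proof -
    have "track_val t k mod ?H < ?H" by (simp add: weight_at_def)
    then show ?thesis using numbers(3) numbers(4)[of k] by (simp add: read_cost_def write_cost_def)
  qed
  then have bound: "4 * ((\<Sum>k<c. read_cost (track_val t) ?H k) + Suc ((\<Sum>k<c. write_cost ?H ?g g' k) + Suc (Suc (2 * ?H))))
      \<le> (8 * c + 6) * length w + 8 * c + 4"
    by (rule track_cost_bound[OF _ numbers(3,1,2)])
  have "4 * r \<le> (8 * c + 6) * length w + 8 * c + 4"
    using order.trans[OF mult_le_mono2[OF r] bound] .
  then have "real (4 * r) \<le> real ((8 * c + 6) * length w + 8 * c + 4)" by (simp only: of_nat_le_iff)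
  then have "real r \<le> step_bound" by (simp add: step_bound_def algebra_simps)
  with run that show ?thesis by blast
qed

lemma track_val_0: "track_val 0 = (\<lambda>_. 0)"
  by (simp add: fun_eq_iff track_val_def bits_value_def cfg_0 sym_bit_blank)

lemma run_start:
  assumes "running 0"
  obtains C where "runs w (fa_init sim_fa) 1 C" "represents 0 C"
proof -
  let ?b = "tm_blank M"
  have "tm_start M \<notin> tm_acc M" "tm_start M \<notin> tm_rej M" using running_state[OF assms] cfg_0 by auto
  let ?y = "Ctl Read (tm_start M) ?b ?b 0 True 0 0 False ?b ?b MStay"
  have "ctl_start = goto Start True 0 0 False ?y" "goto Read True 0 0 False ?y = ?y"
    using \<open>tm_start M \<notin> tm_acc M\<close> \<open>tm_start M \<notin> tm_rej M\<close> by (simp_all add: ctl_start_def goto_def)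
  moreover have "runs w (to_nat (goto Start True 0 0 False ?y), \<lambda>_. 0) 1
      (to_nat (goto Read True 0 0 False ?y), (\<lambda>_. 0)(hi_head True := 1))"
    by (rule run_Start) (simp_all add: parked_def heads_inside_def)
  ultimately have "runs w (fa_init sim_fa) 1 (to_nat ?y, (\<lambda>_. 0)(hi_head True := 1))"
    by (simp add: fa_init_def)
  moreover have "(\<lambda>_. 0)(hi_head True := 1) = standard_pos (in_pos 0) True 1 (track_val 0)"
    by (auto simp: standard_pos_def cfg_0 track_val_0 head_defs)
  moreover have "represents 0 (to_nat (Ctl Read (tm_start M) ?b ?b 0 True 0 0 False ?b ?b MStay),
      standard_pos (in_pos 0) True 1 (track_val 0))"
    by (rule represents_intro) (simp_all add: cfg_0 window_at_def weight_at_def)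
  ultimately show ?thesis using that by simp
qed

lemma run_simulating:
  assumes "running t"
  obtains \<tau> C where "real \<tau> \<le> 1 + real t * step_bound" "runs w (fa_init sim_fa) \<tau> C" "represents t C"
  using assms
proof (induction t arbitrary: thesis)
  case 0
  obtain C where "runs w (fa_init sim_fa) 1 C" "represents 0 C" using run_start[OF 0(2)] .
  then show ?case using 0(1)[of 1 C] by simp
next
  case (Suc t)
  then have "running t" "\<not> tm_halted M w (cfg (Suc t))" by (simp_all add: running_def)
  then obtain \<tau> C where IH: "real \<tau> \<le> 1 + real t * step_bound" "runs w (fa_init sim_fa) \<tau> C" "represents t C"
    using Suc.IH by blast
  obtain r C' where step: "real r \<le> step_bound" "runs w C r C'" "continues t C'"
    using macro_step[OF \<open>running t\<close> IH(3)] by blast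
  have "represents (Suc t) C'" using step(3) \<open>\<not> tm_halted M w (cfg (Suc t))\<close> by (simp add: continues_def)
  moreover have "real (\<tau> + r) \<le> 1 + real (Suc t) * step_bound" using IH(1) step(1) by (simp add: algebra_simps)
  ultimately show ?case using Suc.prems(1) runs_trans[OF IH(2) step(2)] by blast
qed

lemma step_bound_ge_1: "1 \<le> step_bound"
  by (simp add: step_bound_def)

lemma step_bound_plus_1: "step_bound + 1 = (2 * real c + 3 / 2) * real (length w) + 2 * real c + 2"
  by (simp add: step_bound_def)

lemma run_to_halt:
  assumes "tm_first_halt M w m"
  obtains \<tau> C where "real \<tau> \<le> real m * (step_bound + 1)" "runs w (fa_init sim_fa) \<tau> C"
    "fa_halted sim_fa w C" "fa_accepting sim_fa w C \<longleftrightarrow> tm_accepting M w (cfg m)"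
proof (cases m)
  case 0
  have in0: "in_range w 0" by (simp add: in_range_def)
  have "tm_halted M w (cfg 0)" using assms 0 by (simp add: tm_first_halt_def cfg_def)
  then have halted: "tm_start M \<in> tm_acc M \<or> tm_start M \<in> tm_rej M"
    using in0 by (simp add: tm_halted_def cfg_eq cfg_0)
  have heads: "fa_heads_ok sim_fa w (fa_init sim_fa)" by (simp add: fa_heads_ok_def fa_init_def in_range_def)
  have acc: "fst (fa_init sim_fa) \<in> fa_acc sim_fa \<longleftrightarrow> tm_start M \<in> tm_acc M"
    and rej: "fst (fa_init sim_fa) \<in> fa_rej sim_fa \<longleftrightarrow> tm_start M \<notin> tm_acc M \<and> tm_start M \<in> tm_rej M"
    unfolding fa_init_def fst_conv sim_fa_simps(3) to_nat_in_fa_acc[OF ctl_start_in_ctl_space] to_nat_in_fa_rej[OF ctl_start_in_ctl_space]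
    by (simp_all add: ctl_start_def)
  have "fa_halted sim_fa w (fa_init sim_fa)"
    using halted unfolding fa_halted_def Un_iff acc rej by blast
  moreover have "fa_accepting sim_fa w (fa_init sim_fa) \<longleftrightarrow> tm_accepting M w (cfg m)"
    using heads in0 unfolding fa_accepting_def tm_accepting_def acc 0 by (simp add: cfg_eq cfg_0)
  ultimately show ?thesis using that[of 0 "fa_init sim_fa"] by (simp add: step_bound_def)
next
  case (Suc m')
  then have "running m'" using assms by (auto simp: running_def tm_first_halt_def cfg_def)
  then obtain \<tau> C where run: "real \<tau> \<le> 1 + real m' * step_bound" "runs w (fa_init sim_fa) \<tau> C" "represents m' C"
    by (rule run_simulating)
  obtain r C' where step: "real r \<le> step_bound" "runs w C r C'" "continues m' C'"
    using macro_step[OF \<open>running m'\<close> run(3)] by blast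
  have "tm_halted M w (cfg (Suc m'))" using assms Suc by (simp add: tm_first_halt_def cfg_def)
  then have "fa_halted sim_fa w C'" "fa_accepting sim_fa w C' \<longleftrightarrow> tm_accepting M w (cfg m)"
    using step(3) Suc by (simp_all add: continues_def)
  moreover have "real (\<tau> + r) \<le> real m * (step_bound + 1)"
    using run(1) step(1) Suc by (simp add: algebra_simps)
  ultimately show ?thesis using that runs_trans[OF run(2) step(2)] by blast
qed

lemma sim_fa_correct:
  assumes "tm_halts_within M w T"
  shows "fa_halts_within sim_fa w (T * (step_bound + 1))" "fa_accepts sim_fa w \<longleftrightarrow> tm_accepts M w"
proof -
  obtain m' where "real m' \<le> T" and halted: "tm_halted M w (tm_conf_at M w m')"
    using assms by (auto simp: tm_halts_within_def)
  obtain m where "m \<le> m'" "tm_first_halt M w m"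
    by (rule tm_first_halt_exists[OF halted])
  then have "real m \<le> T" using \<open>real m' \<le> T\<close> by linarith
  obtain \<tau> C where run: "real \<tau> \<le> real m * (step_bound + 1)" "runs w (fa_init sim_fa) \<tau> C"
    "fa_halted sim_fa w C" "fa_accepting sim_fa w C \<longleftrightarrow> tm_accepting M w (cfg m)"
    by (rule run_to_halt[OF \<open>tm_first_halt M w m\<close>])
  have "real m * (step_bound + 1) \<le> T * (step_bound + 1)"
    using \<open>real m \<le> T\<close> step_bound_ge_1 by (intro mult_right_mono) auto
  with run runs_fa_first_halt[OF run(2,3)] show "fa_halts_within sim_fa w (T * (step_bound + 1))"
    unfolding fa_halts_within_def by (metis order.trans)
  show "fa_accepts sim_fa w \<longleftrightarrow> tm_accepts M w"
    using fa_accepts_iff_first_halt[OF runs_fa_first_halt(1)[OF run(2,3)]] runs_fa_first_halt(2)[OF run(2,3)] run(4)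
      tm_accepts_iff_first_halt[OF \<open>tm_first_halt M w m\<close>] by (simp add: cfg_def)
qed

end

theorem theorem1:
  fixes M :: "('s::finite, 'a::finite, 'g::finite) tm"
    and c :: nat and t :: "nat \<Rightarrow> real" and L :: "'a list set"
  assumes "c > 0"
    and "card (UNIV :: 'g set) \<le> 2 ^ c"
    and "tm_recognizes M L"
    and "\<forall>w. tm_space_within M w \<lfloor>log 2 (real (length w) + 2)\<rfloor>"
    and "\<forall>w. tm_halts_within M w (t (length w))"
  shows "\<exists>A :: 'a kfa. kfa_wf A \<and> fa_heads A = c + 5 \<and> fa_recognizes A L \<and>
           (\<forall>w. fa_halts_within A w
                 (t (length w) * ((2 * real c + 3 / 2) * real (length w) + 2 * real c + 2)))"
proof -
  obtain enc :: "'g \<Rightarrow> nat" where enc: "inj enc" "enc (tm_blank M) = 0" "\<And>g. enc g < 2 ^ c"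
    using ex_code_blank_zero[OF assms(2)] by blast
  interpret simulation M c enc
    using assms(1) enc by unfold_locales
  have run: "simulated_run M c enc w" for w
    using assms(4) by unfold_locales simp
  show ?thesis
  proof (intro exI[of _ sim_fa] conjI allI)
    show "fa_recognizes sim_fa L"
      using simulated_run.sim_fa_correct(2)[OF run] assms(3,5)
      by (auto simp: fa_recognizes_def tm_recognizes_def)
    show "fa_halts_within sim_fa w (t (length w) * ((2 * real c + 3 / 2) * real (length w) + 2 * real c + 2))" for w
      using simulated_run.sim_fa_correct(1)[OF run assms(5)[rule_format]]
      by (simp only: simulated_run.step_bound_plus_1[OF run])
  qed (simp_all add: kfa_wf_sim_fa)
qed

end
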